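(* Let $n\ge4$ be even. The affine $n$-diagrams lying in $O_n$ and having at least one vertical edge are exactly the diagrams $[S_1,S_2,r(S_1,S_2)+w]$ with $t\in\{2,4,\dots,n\}$, $S_1,S_2\in\mathrm{Ann}(n)\cap I(t)$ and $w\in2\mathbb{Z}$, and distinct such triples $(S_1,S_2,w)$ give distinct diagrams.
   Context: An affine $n$-diagram consists of the nodes $\mathbb{Z}\times\{0,1\}\subset\mathbb{R}^2$ together with curves called edges such that: every node is an endpoint of exactly one edge; edges lie in $\mathbb{R}\times[0,1]$; an edge not joining two nodes is an infinite horizontal line meeting no node, and there are finitely many such; no two edges intersect; the diagram is invariant under horizontal translation by $n$. Diagrams are taken up to isotopy (equivalently drawn on a cylinder with nodes $1,\dots,n$, indices mod $n$, on a top and a bottom circle). An edge is vertical if it joins a top node to a bottom node. The number of intersections of a diagram with the line $x=i+\tfrac12$ means the minimum over isotopic representatives; a diagram lies in $O_n$ if this number is even for every $i\in\mathbb{Z}$ ($O_n$ being the span of such diagrams in the diagram algebra $D_n$). An involution $S$ of $\{1,\dots,n\}$ is annular if for each pair $i<j$ interchanged by $S$: $S(\{i,\dots,j\})=\{i,\dots,j\}$, and $\{i,\dots,j\}$ contains either no fixed point or all fixed points of $S$. $\mathrm{Ann}(n)$: annular involutions; $I(t)$: involutions with exactly $t$ fixed points. For a diagram $D$ with a vertical edge, $w_1(D)$ is the number of pairs $(i,j)\in\mathbb{Z}^2$, $i>j$, with bottom node $(j,0)$ joined to top node $(i,1)$ by an edge crossing $x=1/2$; $w_2(D)$ likewise with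 $i<j$; $w(D)=w_1(D)-w_2(D)$. The map $D\mapsto(S_1,S_2,w(D))$, with $S_1$ (resp. $S_2$) interchanging $i,j$ iff top (resp. bottom) nodes $i,j$ are joined, is a bijection from diagrams with a vertical edge onto triples with $S_1,S_2\in\mathrm{Ann}(n)\cap I(t)$, $t>0$, $w\in\mathbb{Z}$; $[S_1,S_2,w]$ denotes the corresponding diagram. $r(S_1,S_2)$ is the smallest nonnegative integer $r$ with $[S_1,S_2,r]$ in $O_n$. *)

theory Defs
  imports Main
begin

text \<open>Nodes of an affine diagram: (x, True) is the top node (x,1), (x, False) the bottom node (x,0).
  A diagram is represented up to isotopy by its matching of nodes together with the number
  of infinite horizontal lines.\<close>

type_synonym node = "int \<times> bool"
type_synonym diagram = "(node \<Rightarrow> node) \<times> nat"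

definition match :: "diagram \<Rightarrow> node \<Rightarrow> node" where
  "match D = fst D"

definition nlines :: "diagram \<Rightarrow> nat" where
  "nlines D = snd D"

text \<open>Linear order on the boundary of the strip, cut at the left end:
  bottom nodes from left to right, then top nodes from right to left.
  Two chords cross iff their endpoints interleave in this order.\<close>
fun bless :: "node \<Rightarrow> node \<Rightarrow> bool" where
  "bless (a, False) (b, False) = (a < b)"
| "bless (a, False) (b, True) = True"
| "bless (a, True) (b, False) = False"
| "bless (a, True) (b, True) = (b < a)"

definition has_vertical :: "diagram \<Rightarrow> bool" where
  "has_vertical D \<longleftrightarrow> (\<exists>x. snd (match D (x, False)) = True)"

definition is_affine_diagram :: "nat \<Rightarrow> diagram \<Rightarrow> bool" where
  "is_affine_diagram n D \<longleftrightarrow>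
     (\<forall>p. match D p \<noteq> p \<and> match D (match D p) = p) \<and>
     (\<forall>x s. match D (x + int n, s) =
              (fst (match D (x, s)) + int n, snd (match D (x, s)))) \<and>
     (\<forall>p q. bless p (match D p) \<and> bless q (match D q) \<longrightarrow>
            \<not> (bless p q \<and> bless q (match D p) \<and> bless (match D p) (match D q))) \<and>
     (nlines D > 0 \<longrightarrow> \<not> has_vertical D)"

text \<open>Minimal number of intersections with the line x = i + 1/2: every edge whose endpoints
  lie on different sides of the line (counted at its endpoint with smaller x-coordinate),
  plus every horizontal line.\<close>
definition cross_count :: "diagram \<Rightarrow> int \<Rightarrow> nat" where
  "cross_count D i = card {p. fst p \<le> i \<and> i < fst (match D p)} + nlines D"

definition in_O :: "diagram \<Rightarrow> bool" where
  "in_O D \<longleftrightarrow> (\<forall>i. even (cross_count D i))"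

definition invols :: "nat \<Rightarrow> (int \<Rightarrow> int) set" where
  "invols n = {S. (\<forall>x. x \<notin> {1..int n} \<longrightarrow> S x = x) \<and>
                  (\<forall>x\<in>{1..int n}. S x \<in> {1..int n} \<and> S (S x) = x)}"

definition fixpts :: "nat \<Rightarrow> (int \<Rightarrow> int) \<Rightarrow> int set" where
  "fixpts n S = {x \<in> {1..int n}. S x = x}"

definition Ann :: "nat \<Rightarrow> (int \<Rightarrow> int) set" where
  "Ann n = {S \<in> invols n. \<forall>i j. i \<in> {1..int n} \<and> j \<in> {1..int n} \<and> i < j \<and> S i = j \<longrightarrow>
              S ` {i..j} = {i..j} \<and>
              ({i..j} \<inter> fixpts n S = {} \<or> fixpts n S \<subseteq> {i..j})}"

definition Inv :: "nat \<Rightarrow> nat \<Rightarrow> (int \<Rightarrow> int) set" where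
  "Inv n t = {S \<in> invols n. card (fixpts n S) = t}"

text \<open>S_1 (top) and S_2 (bottom): i, j interchanged iff the corresponding nodes (mod n) are joined.\<close>
definition S_side :: "nat \<Rightarrow> bool \<Rightarrow> diagram \<Rightarrow> int \<Rightarrow> int" where
  "S_side n s D i = (if i \<in> {1..int n} \<and> snd (match D (i, s)) = s
                     then (fst (match D (i, s)) - 1) mod int n + 1 else i)"

definition S1 :: "nat \<Rightarrow> diagram \<Rightarrow> int \<Rightarrow> int" where
  "S1 n = S_side n True"

definition S2 :: "nat \<Rightarrow> diagram \<Rightarrow> int \<Rightarrow> int" where
  "S2 n = S_side n False"

definition w1 :: "diagram \<Rightarrow> nat" where
  "w1 D = card {(i, j). i > j \<and> match D (j, False) = (i, True) \<and> j \<le> 0 \<and> 0 < i}"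

definition w2 :: "diagram \<Rightarrow> nat" where
  "w2 D = card {(i, j). i < j \<and> match D (j, False) = (i, True) \<and> i \<le> 0 \<and> 0 < j}"

definition wind :: "diagram \<Rightarrow> int" where
  "wind D = int (w1 D) - int (w2 D)"

definition bracket :: "nat \<Rightarrow> (int \<Rightarrow> int) \<Rightarrow> (int \<Rightarrow> int) \<Rightarrow> int \<Rightarrow> diagram" where
  "bracket n A B w = (THE D. is_affine_diagram n D \<and> has_vertical D \<and>
       S1 n D = A \<and> S2 n D = B \<and> wind D = w)"

definition rmin :: "nat \<Rightarrow> (int \<Rightarrow> int) \<Rightarrow> (int \<Rightarrow> int) \<Rightarrow> int" where
  "rmin n A B = int (LEAST r::nat. in_O (bracket n A B (int r)))"

end

theory Submission
  imports Defs
begin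

text \<open>A diagram D with a vertical edge is determined by S1 D, S2 D and its winding number.
  Its top arcs form the unique periodic lift of S1 D whose arcs never enclose the top end of a
  vertical edge, and likewise at the bottom; by planarity the vertical edges join the lifted
  fixed points of S2 D to those of S1 D in increasing order, so the index of the top end is the
  index of the bottom end plus a constant, which is the winding number. Conversely, every pair
  of annular involutions with the same positive number of fixed points and every shift give a
  diagram, so [S1, S2, w] exists and is unique.

  The parity of the number of intersections with x = i + 1/2 does not depend on i: moving the
  line past column i + 1 changes it by the number of nodes of that column which are not joined
  to each other, which is 0 or 2. At x = 1/2 the count is the number of arcs over the cut plus
  the absolute value of w. Hence [S1, S2, w] lies in O_n iff w has the parity of r(S1, S2);
  finally, an involution of {1..n} with n even has an even number of fixed points.\<close>

section \<open>Residues modulo n and periodic enumeration\<close>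

definition residue :: "nat \<Rightarrow> int \<Rightarrow> int" where
  "residue n x = (x - 1) mod int n + 1"

definition block :: "nat \<Rightarrow> int \<Rightarrow> int" where
  "block n x = (x - 1) div int n"

lemma residue_in_window: "n > 0 \<Longrightarrow> residue n x \<in> {1..int n}"
  unfolding residue_def by (simp add: pos_mod_bound add1_zle_eq)

lemma residue_block: "x = residue n x + block n x * int n"
  unfolding residue_def block_def using mod_div_mult_eq[of "x - 1" "int n"] by linarith

lemma residue_shift: "residue n (x + k * int n) = residue n x"
  unfolding residue_def by (metis add_diff_eq diff_add_eq mod_mult_self1)

lemma block_shift: "n > 0 \<Longrightarrow> block n (x + k * int n) = block n x + k"
  unfolding block_def by (simp add: diff_add_eq[symmetric])

lemma residue_id: "x \<in> {1..int n} \<Longrightarrow> residue n x = x"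
  unfolding residue_def by simp

lemma block_id: "x \<in> {1..int n} \<Longrightarrow> block n x = 0"
  unfolding block_def by simp

lemma residue_eq_iff: "residue n x = residue n y \<longleftrightarrow> y = x + (block n y - block n x) * int n"
proof
  assume "residue n x = residue n y"
  then show "y = x + (block n y - block n x) * int n"
    using residue_block[of x n] residue_block[of y n] by (simp add: algebra_simps)
next
  assume "y = x + (block n y - block n x) * int n"
  then show "residue n x = residue n y" using residue_shift by metis
qed

text \<open>The increasing enumeration of E + n\<int>, normalised so that index 1 is the least element
  of E.\<close>
definition periodic_enum :: "nat \<Rightarrow> int set \<Rightarrow> int \<Rightarrow> int" where
  "periodic_enum n E k = sorted_list_of_set E ! nat ((k - 1) mod int (card E))
                         + ((k - 1) div int (card E)) * int n"

definition periodic_index :: "nat \<Rightarrow> int set \<Rightarrow> int \<Rightarrow> int" where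
  "periodic_index n E x = (THE k. periodic_enum n E k = x)"

locale window_subset =
  fixes n :: nat and E :: "int set"
  assumes subset_window: "E \<subseteq> {1..int n}" and nonempty: "E \<noteq> {}"
begin

abbreviation "enum \<equiv> periodic_enum n E"
abbreviation "elems \<equiv> sorted_list_of_set E"

lemma finite: "finite E"
  using subset_window finite_subset by blast

lemma card_pos: "card E > 0"
  using finite nonempty by (simp add: card_gt_0_iff)

lemma elems_nth: "j < card E \<Longrightarrow> elems ! j \<in> E"
  using finite by (metis length_sorted_list_of_set nth_mem set_sorted_list_of_set)

lemma elems_nth_window: "j < card E \<Longrightarrow> elems ! j \<in> {1..int n}"
  using elems_nth subset_window by blast

lemma elems_nth_less: "j < j' \<Longrightarrow> j' < card E \<Longrightarrow> elems ! j < elems ! j'"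
  using strict_sorted_list_of_set[of E] by (simp add: sorted_wrt_nth_less)

lemma enum_eq:
  assumes "k - 1 = q * int (card E) + int j" and "j < card E"
  shows "enum k = elems ! j + q * int n"
proof -
  have "(k - 1) div int (card E) = q" "(k - 1) mod int (card E) = int j"
    using assms by (simp_all add: add.commute)
  then show ?thesis unfolding periodic_enum_def by simp
qed

lemma enum_decomp:
  obtains q j where "k - 1 = q * int (card E) + int j" and "j < card E"
proof
  show "k - 1 = (k - 1) div int (card E) * int (card E) + int (nat ((k - 1) mod int (card E)))"
    using card_pos by simp
  show "nat ((k - 1) mod int (card E)) < card E"
    using card_pos by (simp add: nat_less_iff)
qed

lemma enum_shift: "enum (k + m * int (card E)) = enum k + m * int n"
proof -
  obtain q j where k: "k - 1 = q * int (card E) + int j" and j: "j < card E"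
    by (rule enum_decomp)
  have "k + m * int (card E) - 1 = (q + m) * int (card E) + int j"
    using k by (simp add: algebra_simps)
  then have "enum (k + m * int (card E)) = elems ! j + (q + m) * int n"
    using enum_eq j by blast
  then show ?thesis using enum_eq[OF k j] by (simp add: algebra_simps)
qed

lemma enum_shift1: "enum (k + int (card E)) = enum k + int n"
  using enum_shift[of k 1] by simp

lemma enum_mono: "k < k' \<Longrightarrow> enum k < enum k'"
proof -
  assume kk: "k < k'"
  obtain q j where k: "k - 1 = q * int (card E) + int j" and j: "j < card E"
    by (rule enum_decomp)
  obtain q' j' where k': "k' - 1 = q' * int (card E) + int j'" and j': "j' < card E"
    by (rule enum_decomp)
  have "q \<le> q'"
  proof (rule ccontr)
    assume "\<not> q \<le> q'"
    then have "(q' + 1) * int (card E) \<le> q * int (card E)"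
      by (intro mult_right_mono) auto
    then show False using k k' kk j' by (simp add: algebra_simps)
  qed
  show ?thesis
  proof (cases "q = q'")
    case True
    then have "j < j'" using k k' kk by simp
    then show ?thesis using enum_eq[OF k j] enum_eq[OF k' j'] elems_nth_less j' True by simp
  next
    case False
    then have "(q + 1) * int n \<le> q' * int n"
      using \<open>q \<le> q'\<close> by (intro mult_right_mono) auto
    then have "q * int n + int n \<le> q' * int n"
      by (simp only: distrib_right mult_1)
    then show ?thesis using enum_eq[OF k j] enum_eq[OF k' j'] elems_nth_window[OF j]
        elems_nth_window[OF j'] by fastforce
  qed
qed

lemma enum_less_iff: "enum k < enum k' \<longleftrightarrow> k < k'"
  using enum_mono[of k k'] enum_mono[of k' k] by (cases k k' rule: linorder_cases) auto

lemma enum_le_iff: "enum k \<le> enum k' \<longleftrightarrow> k \<le> k'"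
  using enum_less_iff[of k' k] by linarith

lemma enum_inj: "enum k = enum k' \<longleftrightarrow> k = k'"
  using enum_le_iff[of k k'] enum_le_iff[of k' k] by linarith

lemma residue_enum: "residue n (enum k) \<in> E"
proof -
  obtain q j where k: "k - 1 = q * int (card E) + int j" and j: "j < card E"
    by (rule enum_decomp)
  have "residue n (enum k) = elems ! j"
    using enum_eq[OF k j] residue_shift residue_id[OF elems_nth_window[OF j]] by simp
  then show ?thesis using elems_nth[OF j] by simp
qed

lemma enum_surj:
  assumes "residue n x \<in> E"
  obtains k where "enum k = x"
proof -
  obtain j where j: "j < card E" "elems ! j = residue n x"
    using assms finite by (metis in_set_conv_nth length_sorted_list_of_set set_sorted_list_of_set)
  have "enum (int j + 1 + block n x * int (card E)) = x"
    using enum_eq[OF _ j(1), of "int j + 1 + block n x * int (card E)" "block n x"] j(2)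
      residue_block[of x n] by simp
  then show ?thesis using that by blast
qed

lemma enum_pos_iff: "1 \<le> enum k \<longleftrightarrow> 1 \<le> k"
proof -
  have "enum 1 = elems ! 0" using enum_eq[of 1 0 0] card_pos by simp
  then have one: "1 \<le> enum 1" using elems_nth_window[of 0] card_pos by simp
  have "enum 0 = elems ! (card E - 1) - int n"
    using enum_eq[of 0 "-1" "card E - 1"] card_pos by (simp add: of_nat_diff)
  then have zero: "enum 0 \<le> 0" using elems_nth_window[of "card E - 1"] card_pos by simp
  show ?thesis using one zero enum_le_iff[of k 0] enum_le_iff[of 1 k] by linarith
qed

lemma index_enum: "periodic_index n E (enum k) = k"
  unfolding periodic_index_def by (rule the_equality) (simp_all add: enum_inj)

lemma enum_index: "residue n x \<in> E \<Longrightarrow> enum (periodic_index n E x) = x"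
  by (metis enum_surj index_enum)

end

section \<open>Non-crossing matchings\<close>

definition no_cross_top :: "(node \<Rightarrow> node) \<Rightarrow> bool" where
  "no_cross_top M \<longleftrightarrow> (\<forall>a b c d. M (b, True) = (a, True) \<and> a < b \<and> M (d, True) = (c, True) \<and> c < d
     \<longrightarrow> \<not> (c < a \<and> a < d \<and> d < b))"
definition no_cross_top_vert :: "(node \<Rightarrow> node) \<Rightarrow> bool" where
  "no_cross_top_vert M \<longleftrightarrow> (\<forall>c d x y. M (d, True) = (c, True) \<and> c < d \<and> M (y, False) = (x, True)
     \<longrightarrow> \<not> (c < x \<and> x < d))"
definition no_cross_verts :: "(node \<Rightarrow> node) \<Rightarrow> bool" where
  "no_cross_verts M \<longleftrightarrow> (\<forall>x y x' y'. M (y, False) = (x, True) \<and> M (y', False) = (x', True) \<and> y < y'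
     \<longrightarrow> \<not> x' < x)"
definition no_cross_bot_vert :: "(node \<Rightarrow> node) \<Rightarrow> bool" where
  "no_cross_bot_vert M \<longleftrightarrow> (\<forall>a b x y. M (a, False) = (b, False) \<and> a < b \<and> M (y, False) = (x, True)
     \<longrightarrow> \<not> (a < y \<and> y < b))"
definition no_cross_bot :: "(node \<Rightarrow> node) \<Rightarrow> bool" where
  "no_cross_bot M \<longleftrightarrow> (\<forall>a b c d. M (a, False) = (b, False) \<and> a < b \<and> M (c, False) = (d, False) \<and> c < d
     \<longrightarrow> \<not> (a < c \<and> c < b \<and> b < d))"
definition noncrossing :: "(node \<Rightarrow> node) \<Rightarrow> bool" where
  "noncrossing M \<longleftrightarrow> (\<forall>p q. bless p (M p) \<and> bless q (M q) \<longrightarrow>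
     \<not> (bless p q \<and> bless q (M p) \<and> bless (M p) (M q)))"

lemma no_cross_if_noncrossing:
  assumes nc: "noncrossing M"
  shows "no_cross_top M \<and> no_cross_top_vert M \<and> no_cross_verts M \<and>
    no_cross_bot_vert M \<and> no_cross_bot M"
  unfolding no_cross_top_def no_cross_top_vert_def no_cross_verts_def no_cross_bot_vert_def
    no_cross_bot_def
proof (intro conjI allI impI notI)
  fix a b c d
  assume "M (b, True) = (a, True) \<and> a < b \<and> M (d, True) = (c, True) \<and> c < d"
    "c < a \<and> a < d \<and> d < b"
  then show False
    using nc[unfolded noncrossing_def, rule_format, of "(b, True)" "(d, True)"] by auto
next
  fix c d x y
  assume "M (d, True) = (c, True) \<and> c < d \<and> M (y, False) = (x, True)" "c < x \<and> x < d"
  then show False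
    using nc[unfolded noncrossing_def, rule_format, of "(y, False)" "(d, True)"] by auto
next
  fix x y x' y'
  assume "M (y, False) = (x, True) \<and> M (y', False) = (x', True) \<and> y < y'" "x' < x"
  then show False
    using nc[unfolded noncrossing_def, rule_format, of "(y, False)" "(y', False)"] by auto
next
  fix a b x y
  assume "M (a, False) = (b, False) \<and> a < b \<and> M (y, False) = (x, True)" "a < y \<and> y < b"
  then show False
    using nc[unfolded noncrossing_def, rule_format, of "(a, False)" "(y, False)"] by auto
next
  fix a b c d
  assume "M (a, False) = (b, False) \<and> a < b \<and> M (c, False) = (d, False) \<and> c < d"
    "a < c \<and> c < b \<and> b < d"
  then show False
    using nc[unfolded noncrossing_def, rule_format, of "(a, False)" "(c, False)"] by auto
qed

lemma noncrossing_if_no_cross: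
  assumes TT: "no_cross_top M" and TV: "no_cross_top_vert M" and VV: "no_cross_verts M"
    and BV: "no_cross_bot_vert M" and BB: "no_cross_bot M"
  shows "noncrossing M"
  unfolding noncrossing_def
proof (intro allI impI notI)
  fix p q
  assume h: "bless p (M p) \<and> bless q (M q)" "bless p q \<and> bless q (M p) \<and> bless (M p) (M q)"
  obtain x s y u x' s' y' u' where p: "p = (x, s)" and q: "q = (y, u)"
    and mp: "M (x, s) = (x', s')" and mq: "M (y, u) = (y', u')"
    by (metis prod.collapse)
  have "bless (x, s) (x', s')" "bless (y, u) (y', u')" "bless (x, s) (y, u)"
    "bless (y, u) (x', s')" "bless (x', s') (y', u')"
    using h unfolding p q mp mq by auto
  then show False
    using mp mq TT[unfolded no_cross_top_def, rule_format, where a=x' and b=x and c=y' and d=y]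
      TV[unfolded no_cross_top_vert_def, rule_format, where c=y' and d=y and x=x' and y=x]
      VV[unfolded no_cross_verts_def, rule_format, where x=x' and y=x and x'=y' and y'=y]
      BV[unfolded no_cross_bot_vert_def, rule_format, where a=x and b=x' and x=y' and y=y]
      BB[unfolded no_cross_bot_def, rule_format, where a=x and b=x' and c=y and d=y']
    by (cases s; cases s'; cases u; cases u') auto
qed

section \<open>Lifting an annular involution\<close>

text \<open>The periodic involution of the integers lifting an annular involution A: the arc joining
  i and A i is drawn inside the window {1..n} unless it would enclose a fixed point (the foot
  of a vertical edge), in which case it goes around the cylinder.\<close>
definition partner_base :: "nat \<Rightarrow> (int \<Rightarrow> int) \<Rightarrow> int \<Rightarrow> int" where
  "partner_base n A i = (if \<forall>f\<in>{min i (A i)..max i (A i)}. A f \<noteq> f then A i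
                         else if i < A i then A i - int n else A i + int n)"

definition partner :: "nat \<Rightarrow> (int \<Rightarrow> int) \<Rightarrow> int \<Rightarrow> int" where
  "partner n A x = partner_base n A (residue n x) + block n x * int n"

definition fixed_mod :: "nat \<Rightarrow> (int \<Rightarrow> int) \<Rightarrow> int \<Rightarrow> bool" where
  "fixed_mod n A x \<longleftrightarrow> A (residue n x) = residue n x"

locale annular_inv =
  fixes n :: nat and A :: "int \<Rightarrow> int"
  assumes annular_inv: "A \<in> Ann n" and has_fixpt: "fixpts n A \<noteq> {}"
begin

lemma n_pos: "n > 0"
  using has_fixpt unfolding fixpts_def by fastforce

lemma outside: "x \<notin> {1..int n} \<Longrightarrow> A x = x"
  using annular_inv unfolding Ann_def invols_def by auto

lemma maps_window: "x \<in> {1..int n} \<Longrightarrow> A x \<in> {1..int n}"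
  using annular_inv unfolding Ann_def invols_def by auto

lemma involutive: "A (A x) = x"
  using annular_inv unfolding Ann_def invols_def by (cases "x \<in> {1..int n}") auto

lemma annular:
  "i \<in> {1..int n} \<Longrightarrow> j \<in> {1..int n} \<Longrightarrow> i < j \<Longrightarrow> A i = j \<Longrightarrow>
   A ` {i..j} = {i..j} \<and> ({i..j} \<inter> fixpts n A = {} \<or> fixpts n A \<subseteq> {i..j})"
  using annular_inv unfolding Ann_def by blast

lemma fixed_mod_iff: "fixed_mod n A x \<longleftrightarrow> residue n x \<in> fixpts n A"
  using residue_in_window[OF n_pos, of x] unfolding fixed_mod_def fixpts_def by auto

lemma fixed_mod_shift: "fixed_mod n A (x + k * int n) \<longleftrightarrow> fixed_mod n A x"
  unfolding fixed_mod_def by (simp add: residue_shift)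

lemma partner_id: "x \<in> {1..int n} \<Longrightarrow> partner n A x = partner_base n A x"
  unfolding partner_def by (simp add: residue_id block_id)

lemma partner_residue: "partner n A x = partner n A (residue n x) + block n x * int n"
  using partner_id[OF residue_in_window[OF n_pos]] unfolding partner_def by simp

lemma partner_shift: "partner n A (x + k * int n) = partner n A x + k * int n"
  unfolding partner_def using residue_shift block_shift[OF n_pos] by (simp add: algebra_simps)

lemma residue_partner_base:
  assumes "i \<in> {1..int n}"
  shows "residue n (partner_base n A i) = A i"
proof -
  have r: "residue n (A i) = A i" using maps_window[OF assms] residue_id by blast
  then have "residue n (A i - int n) = A i" "residue n (A i + int n) = A i"
    using residue_shift[of n "A i" "-1"] residue_shift[of n "A i" 1] by simp_all
  then show ?thesis using r unfolding partner_base_def by simp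
qed

lemma residue_partner: "residue n (partner n A x) = A (residue n x)"
  unfolding partner_def residue_shift
  using residue_partner_base[OF residue_in_window[OF n_pos]] .

lemma fixed_mod_partner: "\<not> fixed_mod n A x \<Longrightarrow> \<not> fixed_mod n A (partner n A x)"
  using residue_partner involutive unfolding fixed_mod_def by metis

lemma partner_base_involutive:
  assumes i: "i \<in> {1..int n}" and nf: "A i \<noteq> i"
  shows "partner n A (partner n A i) = i \<and> partner n A i \<noteq> i \<and> \<bar>partner n A i - i\<bar> < int n"
proof -
  let ?j = "A i"
  have j: "?j \<in> {1..int n}" using maps_window[OF i] .
  have Aj: "A ?j = i" using involutive .
  have span: "{min ?j (A ?j)..max ?j (A ?j)} = {min i ?j..max i ?j}"
    using Aj by (simp add: min.commute max.commute)
  show ?thesis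
  proof (cases "\<forall>f\<in>{min i ?j..max i ?j}. A f \<noteq> f")
    case True
    then have "partner n A i = ?j" "partner n A ?j = i"
      unfolding partner_id[OF i] partner_id[OF j] partner_base_def using Aj span by auto
    then show ?thesis using i j nf by auto
  next
    case False
    show ?thesis
    proof (cases "i < ?j")
      case True
      then have "partner n A i = ?j - int n" "partner n A ?j = i + int n"
        unfolding partner_id[OF i] partner_id[OF j] partner_base_def using False span Aj by auto
      moreover have "partner n A (?j - int n) = partner n A ?j - int n"
        using partner_shift[of ?j "-1"] by simp
      ultimately show ?thesis using i j True by auto
    next
      case ji: False
      then have "partner n A i = ?j + int n" "partner n A ?j = i - int n"
        unfolding partner_id[OF i] partner_id[OF j] partner_base_def using False span Aj nf by auto
      moreover have "partner n A (?j + int n) = partner n A ?j + int n"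
        using partner_shift[of ?j 1] by simp
      ultimately show ?thesis using i j ji nf by auto
    qed
  qed
qed

lemma partner_involutive: "\<not> fixed_mod n A x \<Longrightarrow> partner n A (partner n A x) = x"
proof -
  assume nf: "\<not> fixed_mod n A x"
  let ?i = "residue n x" and ?q = "block n x"
  have "partner n A (partner n A x) = partner n A (partner n A ?i + ?q * int n)"
    using partner_residue by metis
  also have "\<dots> = partner n A (partner n A ?i) + ?q * int n" by (rule partner_shift)
  also have "\<dots> = x"
    using partner_base_involutive[OF residue_in_window[OF n_pos]] nf residue_block[of x n]
    unfolding fixed_mod_def by simp
  finally show ?thesis .
qed

lemma partner_dist: "\<not> fixed_mod n A x \<Longrightarrow> partner n A x \<noteq> x \<and> \<bar>partner n A x - x\<bar> < int n"
  using partner_base_involutive[OF residue_in_window[OF n_pos], of x] partner_residue[of x]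
    residue_block[of x n]
  unfolding fixed_mod_def by auto

lemma partner_nested_inside:
  assumes i: "i \<in> {1..int n}" and ij: "i < A i" and nofix: "\<forall>f\<in>{i..A i}. A f \<noteq> f"
    and y: "i < y" "y < A i"
  shows "\<not> fixed_mod n A y \<and> i < partner n A y \<and> partner n A y < A i"
proof -
  let ?j = "A i"
  have j: "?j \<in> {1..int n}" using maps_window[OF i] .
  have y_win: "y \<in> {1..int n}" using y i j by auto
  have nfy: "A y \<noteq> y" using nofix y by auto
  have "A y \<in> {i..?j}" using annular[OF i j ij refl] y by auto
  moreover have "A y \<noteq> i" "A y \<noteq> ?j" using y involutive by (metis less_irrefl)+
  ultimately have Ay: "i < A y" "A y < ?j" by auto
  have "\<forall>f\<in>{min y (A y)..max y (A y)}. A f \<noteq> f"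
    using nofix y Ay by (auto simp: min_def max_def)
  then have "partner n A y = A y"
    unfolding partner_id[OF y_win] partner_base_def by simp
  then show ?thesis using Ay nfy residue_id[OF y_win] unfolding fixed_mod_def by simp
qed

lemma partner_base_outside_span:
  assumes span: "A ` {l..r} = {l..r}" and fix_span: "fixpts n A \<subseteq> {l..r}"
    and z: "z \<in> {1..int n}" and z_out: "z < l \<or> r < z"
  shows "A z \<noteq> z \<and> (A z < l \<or> r < A z) \<and>
    partner_base n A z = (if (z < l \<and> A z < l) \<or> (r < z \<and> r < A z) then A z
                          else if z < A z then A z - int n else A z + int n)"
proof -
  have nfz: "A z \<noteq> z" using fix_span z_out z unfolding fixpts_def by auto
  have Az: "A z \<in> {1..int n}" using maps_window[OF z] .
  have Az_out: "A z < l \<or> r < A z"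
  proof (rule ccontr)
    assume "\<not> (A z < l \<or> r < A z)"
    then have "A (A z) \<in> {l..r}" using span by auto
    then show False using involutive z_out by auto
  qed
  have "partner_base n A z = (if (z < l \<and> A z < l) \<or> (r < z \<and> r < A z) then A z
                              else if z < A z then A z - int n else A z + int n)"
  proof (cases "(z < l \<and> A z < l) \<or> (r < z \<and> r < A z)")
    case True
    have "\<forall>f\<in>{min z (A z)..max z (A z)}. A f \<noteq> f"
    proof
      fix f assume f: "f \<in> {min z (A z)..max z (A z)}"
      then have "f \<in> {1..int n}" "f < l \<or> r < f"
        using True z Az by (auto simp: min_def max_def split: if_splits)
      then show "A f \<noteq> f" using fix_span unfolding fixpts_def by auto
    qed
    then show ?thesis unfolding partner_base_def using True by simp
  next
    case False
    obtain f0 where f0: "f0 \<in> fixpts n A" using has_fixpt by blast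
    then have "f0 \<in> {min z (A z)..max z (A z)}" using False z_out Az_out fix_span by auto
    then have "\<not> (\<forall>f\<in>{min z (A z)..max z (A z)}. A f \<noteq> f)" using f0 unfolding fixpts_def by blast
    then show ?thesis by (simp only: partner_base_def if_not_P[OF False] if_False)
  qed
  then show ?thesis using nfz Az_out by blast
qed

lemma partner_nested_around:
  assumes i: "i \<in> {1..int n}" and ji: "A i < i" and fix_between: "\<exists>f\<in>{A i..i}. A f = f"
    and y: "i < y" "y < A i + int n"
  shows "\<not> fixed_mod n A y \<and> i < partner n A y \<and> partner n A y < A i + int n"
proof -
  let ?j = "A i"
  have j: "?j \<in> {1..int n}" using maps_window[OF i] .
  have span: "A ` {?j..i} = {?j..i}"
    using annular[OF j i ji involutive] by simp
  have fix_span: "fixpts n A \<subseteq> {?j..i}"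
  proof -
    obtain f where "f \<in> {?j..i}" "A f = f" using fix_between by blast
    moreover have "f \<in> {1..int n}" using \<open>f \<in> {?j..i}\<close> i j by auto
    ultimately have "{?j..i} \<inter> fixpts n A \<noteq> {}" unfolding fixpts_def by auto
    then show ?thesis using annular[OF j i ji involutive] by blast
  qed
  define z where "z = residue n y"
  have z: "z \<in> {1..int n}" using residue_in_window[OF n_pos] z_def by auto
  have y_cases: "(y \<le> int n \<and> z = y \<and> block n y = 0) \<or> (y > int n \<and> z = y - int n \<and> block n y = 1)"
  proof (cases "y \<le> int n")
    case True
    then have "y \<in> {1..int n}" using y i by auto
    then show ?thesis using residue_id block_id z_def True by auto
  next
    case False
    then have y': "y - int n \<in> {1..int n}" using y j by auto
    have "residue n y = y - int n" "block n y = 1"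
      using residue_shift[of n "y - int n" 1] block_shift[OF n_pos, of "y - int n" 1]
        residue_id[OF y'] block_id[OF y'] by simp_all
    then show ?thesis using False z_def by auto
  qed
  have z_out: "z < ?j \<or> i < z" using y_cases y by auto
  note outside = partner_base_outside_span[OF span fix_span z z_out]
  have "partner n A y = partner_base n A z + block n y * int n" unfolding partner_def z_def ..
  moreover have "\<not> fixed_mod n A y" using outside unfolding fixed_mod_def z_def by simp
  ultimately show ?thesis
    using outside maps_window[OF z] y_cases z_out z y ji j i by (auto split: if_splits)
qed

lemma partner_nested:
  assumes nf: "\<not> fixed_mod n A a" and lt: "a < partner n A a"
    and x: "a < x" "x < partner n A a"
  shows "\<not> fixed_mod n A x \<and> a < partner n A x \<and> partner n A x < partner n A a"
proof -
  let ?i = "residue n a" and ?q = "block n a"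
  have i: "?i \<in> {1..int n}" using residue_in_window[OF n_pos] .
  have nfi: "A ?i \<noteq> ?i" using nf unfolding fixed_mod_def .
  have pa: "partner n A a = partner n A ?i + ?q * int n" using partner_residue by metis
  have a: "a = ?i + ?q * int n" using residue_block by metis
  define y where "y = x - ?q * int n"
  have lt': "?i < partner n A ?i" using lt pa a by linarith
  have y: "?i < y" "y < partner n A ?i" using x pa a y_def by linarith+
  have nested: "\<not> fixed_mod n A y \<and> ?i < partner n A y \<and> partner n A y < partner n A ?i"
  proof (cases "\<forall>f\<in>{min ?i (A ?i)..max ?i (A ?i)}. A f \<noteq> f")
    case True
    then have "partner n A ?i = A ?i" unfolding partner_id[OF i] partner_base_def by simp
    then show ?thesis using partner_nested_inside[OF i] True lt' y by auto
  next
    case False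
    then have "A ?i < ?i" "partner n A ?i = A ?i + int n"
      using lt' nfi i maps_window[OF i] unfolding partner_id[OF i] partner_base_def
      by (auto split: if_splits)
    then show ?thesis using partner_nested_around[OF i] False y by auto
  qed
  have "x = y + ?q * int n" using y_def by simp
  then have "partner n A x = partner n A y + ?q * int n" "fixed_mod n A x \<longleftrightarrow> fixed_mod n A y"
    using partner_shift fixed_mod_shift by metis+
  then show ?thesis using nested pa a by auto
qed

end

section \<open>The diagram of a triple\<close>

definition triple_match :: "nat \<Rightarrow> (int \<Rightarrow> int) \<Rightarrow> (int \<Rightarrow> int) \<Rightarrow> int \<Rightarrow> node \<Rightarrow> node" where
  "triple_match n A B s p = (if snd p then
      (if fixed_mod n A (fst p)
       then (periodic_enum n (fixpts n B) (periodic_index n (fixpts n A) (fst p) - s), False)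
       else (partner n A (fst p), True))
    else
      (if fixed_mod n B (fst p)
       then (periodic_enum n (fixpts n A) (periodic_index n (fixpts n B) (fst p) + s), True)
       else (partner n B (fst p), False)))"

definition triple_diagram :: "nat \<Rightarrow> (int \<Rightarrow> int) \<Rightarrow> (int \<Rightarrow> int) \<Rightarrow> int \<Rightarrow> diagram" where
  "triple_diagram n A B s = (triple_match n A B s, 0)"

lemma (in annular_inv) window_subset_fixpts: "window_subset n (fixpts n A)"
  using has_fixpt unfolding window_subset_def fixpts_def by auto

lemma (in annular_inv) S_side_eq:
  assumes fixed: "\<And>x. fixed_mod n A x \<Longrightarrow> snd (match D (x, s)) \<noteq> s"
    and moved: "\<And>x. \<not> fixed_mod n A x \<Longrightarrow> match D (x, s) = (partner n A x, s)"
  shows "S_side n s D = A"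
proof
  fix i
  show "S_side n s D i = A i"
  proof (cases "i \<in> {1..int n}")
    case i: True
    show ?thesis
    proof (cases "fixed_mod n A i")
      case True
      then show ?thesis using fixed[OF True] residue_id[OF i] unfolding S_side_def fixed_mod_def
        by auto
    next
      case False
      then show ?thesis using moved[OF False] residue_partner[of i] residue_id[OF i] i
        unfolding S_side_def residue_def by simp
    qed
  next
    case False
    then show ?thesis unfolding S_side_def using outside[OF False] by auto
  qed
qed

locale admissible_pair = A: annular_inv n A + B: annular_inv n B for n A B +
  assumes same_card: "card (fixpts n A) = card (fixpts n B)"
begin

sublocale EA: window_subset n "fixpts n A" by (rule A.window_subset_fixpts)
sublocale EB: window_subset n "fixpts n B" by (rule B.window_subset_fixpts)

abbreviation "a \<equiv> periodic_enum n (fixpts n A)"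
abbreviation "b \<equiv> periodic_enum n (fixpts n B)"
abbreviation "ai \<equiv> periodic_index n (fixpts n A)"
abbreviation "bi \<equiv> periodic_index n (fixpts n B)"
abbreviation "M \<equiv> triple_match n A B"

lemma n_pos: "n > 0" using A.n_pos .

lemma match_top:
  "M s (x, True) = (if fixed_mod n A x then (b (ai x - s), False) else (partner n A x, True))"
  unfolding triple_match_def by simp

lemma match_bot:
  "M s (y, False) = (if fixed_mod n B y then (a (bi y + s), True) else (partner n B y, False))"
  unfolding triple_match_def by simp

lemma fixed_a: "fixed_mod n A (a k)" using A.fixed_mod_iff EA.residue_enum by blast
lemma fixed_b: "fixed_mod n B (b k)" using B.fixed_mod_iff EB.residue_enum by blast
lemma a_ai: "fixed_mod n A x \<Longrightarrow> a (ai x) = x" using A.fixed_mod_iff EA.enum_index by blast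
lemma b_bi: "fixed_mod n B x \<Longrightarrow> b (bi x) = x" using B.fixed_mod_iff EB.enum_index by blast
lemma ai_a: "ai (a k) = k" using EA.index_enum .
lemma bi_b: "bi (b k) = k" using EB.index_enum .

lemma match_involutive: "M s (M s p) = p"
proof (cases p)
  case (Pair x u)
  then show ?thesis
    by (cases u; cases "fixed_mod n A x"; cases "fixed_mod n B x")
      (simp_all add: match_top match_bot fixed_a fixed_b a_ai b_bi ai_a bi_b
        A.partner_involutive A.fixed_mod_partner B.partner_involutive B.fixed_mod_partner)
qed

lemma match_no_fixpt: "M s p \<noteq> p"
proof (cases p)
  case (Pair x u)
  then show ?thesis
    using A.partner_dist[of x] B.partner_dist[of x]
    by (cases u; cases "fixed_mod n A x"; cases "fixed_mod n B x")
      (simp_all add: match_top match_bot)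
qed

lemma ai_shift: "fixed_mod n A x \<Longrightarrow> ai (x + int n) = ai x + int (card (fixpts n A))"
  using EA.enum_shift1 a_ai ai_a by metis

lemma bi_shift: "fixed_mod n B x \<Longrightarrow> bi (x + int n) = bi x + int (card (fixpts n B))"
  using EB.enum_shift1 b_bi bi_b by metis

lemma match_periodic: "M s (x + int n, u) = (fst (M s (x, u)) + int n, snd (M s (x, u)))"
proof -
  have fixed: "fixed_mod n A (x + int n) \<longleftrightarrow> fixed_mod n A x"
    "fixed_mod n B (x + int n) \<longleftrightarrow> fixed_mod n B x"
    using A.fixed_mod_shift[of x 1] B.fixed_mod_shift[of x 1] by simp_all
  have arcs: "partner n A (x + int n) = partner n A x + int n"
    "partner n B (x + int n) = partner n B x + int n"
    using A.partner_shift[of x 1] B.partner_shift[of x 1] by simp_all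
  have "fixed_mod n A x \<Longrightarrow> b (ai (x + int n) - s) = b (ai x - s) + int n"
    using ai_shift EB.enum_shift1[of "ai x - s"] same_card by (simp add: algebra_simps)
  moreover have "fixed_mod n B x \<Longrightarrow> a (bi (x + int n) + s) = a (bi x + s) + int n"
    using bi_shift EA.enum_shift1[of "bi x + s"] same_card by (simp add: algebra_simps)
  ultimately show ?thesis using fixed arcs by (cases u) (simp_all add: match_top match_bot)
qed

lemma top_arc:
  "M s (y, True) = (x, True) \<Longrightarrow>
    \<not> fixed_mod n A x \<and> \<not> fixed_mod n A y \<and> partner n A x = y \<and> partner n A y = x"
  using match_top[of s y] A.partner_involutive A.fixed_mod_partner by (auto split: if_splits)

lemma bot_arc:
  "M s (y, False) = (x, False) \<Longrightarrow>
    \<not> fixed_mod n B x \<and> \<not> fixed_mod n B y \<and> partner n B x = y \<and> partner n B y = x"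
  using match_bot[of s y] B.partner_involutive B.fixed_mod_partner by (auto split: if_splits)

lemma vertical_edge:
  "M s (y, False) = (x, True) \<Longrightarrow> fixed_mod n B y \<and> x = a (bi y + s) \<and> fixed_mod n A x"
  using match_bot[of s y] fixed_a by (auto split: if_splits)

lemma match_no_cross_verts: "no_cross_verts (M s)"
  unfolding no_cross_verts_def
proof (intro allI impI notI)
  fix x y x' y'
  assume h: "M s (y, False) = (x, True) \<and> M s (y', False) = (x', True) \<and> y < y'" and "x' < x"
  have "fixed_mod n B y" "fixed_mod n B y'" "x = a (bi y + s)" "x' = a (bi y' + s)"
    using vertical_edge h by auto
  then have "x < x'" using h b_bi EB.enum_less_iff EA.enum_less_iff by (metis add_less_cancel_right)
  then show False using \<open>x' < x\<close> by simp
qed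

lemma match_noncrossing: "noncrossing (M s)"
proof (rule noncrossing_if_no_cross[OF _ _ match_no_cross_verts])
  show "no_cross_top (M s)"
    unfolding no_cross_top_def
  proof (intro allI impI notI)
    fix x y c d
    assume "M s (y, True) = (x, True) \<and> x < y \<and> M s (d, True) = (c, True) \<and> c < d"
      and "c < x \<and> x < d \<and> d < y"
    then show False using top_arc A.partner_nested[of c x] by force
  qed
  show "no_cross_top_vert (M s)"
    unfolding no_cross_top_vert_def
  proof (intro allI impI notI)
    fix c d x y
    assume "M s (d, True) = (c, True) \<and> c < d \<and> M s (y, False) = (x, True)" and "c < x \<and> x < d"
    then show False using top_arc vertical_edge A.partner_nested[of c x] by force
  qed
  show "no_cross_bot_vert (M s)"
    unfolding no_cross_bot_vert_def
  proof (intro allI impI notI)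
    fix c d x y
    assume "M s (c, False) = (d, False) \<and> c < d \<and> M s (y, False) = (x, True)" and "c < y \<and> y < d"
    then show False using bot_arc vertical_edge B.partner_nested[of c y] by force
  qed
  show "no_cross_bot (M s)"
    unfolding no_cross_bot_def
  proof (intro allI impI notI)
    fix x y c d
    assume "M s (x, False) = (y, False) \<and> x < y \<and> M s (c, False) = (d, False) \<and> c < d"
      and "x < c \<and> c < y \<and> y < d"
    then show False using bot_arc B.partner_nested[of x c] by force
  qed
qed

lemma diagram_affine: "is_affine_diagram n (triple_diagram n A B s)"
  using match_involutive match_no_fixpt match_periodic match_noncrossing
  unfolding is_affine_diagram_def noncrossing_def match_def nlines_def triple_diagram_def
  by auto

lemma diagram_has_vertical: "has_vertical (triple_diagram n A B s)"
  unfolding has_vertical_def match_def triple_diagram_def using match_bot fixed_b by auto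

lemma S1_diagram: "S1 n (triple_diagram n A B s) = A"
  unfolding S1_def using match_top
  by (intro A.S_side_eq) (simp_all add: match_def triple_diagram_def)

lemma S2_diagram: "S2 n (triple_diagram n A B s) = B"
  unfolding S2_def using match_bot
  by (intro B.S_side_eq) (simp_all add: match_def triple_diagram_def)

lemma w1_set: "{(i, j). i > j \<and> M s (j, False) = (i, True) \<and> j \<le> 0 \<and> 0 < i}
    = (\<lambda>m. (a (m + s), b m)) ` {1 - s..0}"
proof (intro equalityI subsetI)
  fix p assume "p \<in> {(i, j). i > j \<and> M s (j, False) = (i, True) \<and> j \<le> 0 \<and> 0 < i}"
  then obtain i j where p: "p = (i, j)" and h: "M s (j, False) = (i, True)" "j \<le> 0" "0 < i"
    by blast
  have v: "fixed_mod n B j" "i = a (bi j + s)" using vertical_edge[OF h(1)] by auto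
  have "bi j \<le> 0" using EB.enum_pos_iff[of "bi j"] b_bi v h by simp
  moreover have "1 \<le> bi j + s" using EA.enum_pos_iff[of "bi j + s"] v h by simp
  ultimately show "p \<in> (\<lambda>m. (a (m + s), b m)) ` {1 - s..0}" using p v b_bi by force
next
  fix p assume "p \<in> (\<lambda>m. (a (m + s), b m)) ` {1 - s..0}"
  then obtain m where p: "p = (a (m + s), b m)" and m: "1 - s \<le> m" "m \<le> 0" by auto
  have "b m \<le> 0" "a (m + s) \<ge> 1"
    using EB.enum_pos_iff[of m] EA.enum_pos_iff[of "m + s"] m by simp_all
  moreover have "M s (b m, False) = (a (m + s), True)" using match_bot fixed_b bi_b by simp
  ultimately show "p \<in> {(i, j). i > j \<and> M s (j, False) = (i, True) \<and> j \<le> 0 \<and> 0 < i}"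
    using p by auto
qed

lemma w2_set: "{(i, j). i < j \<and> M s (j, False) = (i, True) \<and> i \<le> 0 \<and> 0 < j}
    = (\<lambda>m. (a (m + s), b m)) ` {1..-s}"
proof (intro equalityI subsetI)
  fix p assume "p \<in> {(i, j). i < j \<and> M s (j, False) = (i, True) \<and> i \<le> 0 \<and> 0 < j}"
  then obtain i j where p: "p = (i, j)" and h: "M s (j, False) = (i, True)" "i \<le> 0" "0 < j"
    by blast
  have v: "fixed_mod n B j" "i = a (bi j + s)" using vertical_edge[OF h(1)] by auto
  have "bi j \<ge> 1" using EB.enum_pos_iff[of "bi j"] b_bi v h by simp
  moreover have "\<not> 1 \<le> bi j + s" using EA.enum_pos_iff[of "bi j + s"] v h by simp
  ultimately show "p \<in> (\<lambda>m. (a (m + s), b m)) ` {1..-s}" using p v b_bi by force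
next
  fix p assume "p \<in> (\<lambda>m. (a (m + s), b m)) ` {1..-s}"
  then obtain m where p: "p = (a (m + s), b m)" and m: "1 \<le> m" "m \<le> -s" by auto
  have "b m \<ge> 1" "\<not> a (m + s) \<ge> 1"
    using EB.enum_pos_iff[of m] EA.enum_pos_iff[of "m + s"] m by simp_all
  moreover have "M s (b m, False) = (a (m + s), True)" using match_bot fixed_b bi_b by simp
  ultimately show "p \<in> {(i, j). i < j \<and> M s (j, False) = (i, True) \<and> i \<le> 0 \<and> 0 < j}"
    using p by auto
qed

lemma wind_diagram: "wind (triple_diagram n A B s) = s"
proof -
  have inj: "inj (\<lambda>m. (a (m + s), b m))" by (rule injI) (simp add: EB.enum_inj)
  have "w1 (triple_diagram n A B s) = nat s" "w2 (triple_diagram n A B s) = nat (-s)"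
    unfolding w1_def w2_def match_def triple_diagram_def
    using w1_set w2_set card_image[OF inj_on_subset[OF inj]] by simp_all
  then show ?thesis unfolding wind_def by simp
qed

end

section \<open>Parity of the crossing numbers\<close>

definition crossing_set :: "(node \<Rightarrow> node) \<Rightarrow> int \<Rightarrow> node set" where
  "crossing_set M i = {p. fst p \<le> i \<and> i < fst (M p)}"

lemma cross_count_eq: "cross_count D i = card (crossing_set (match D) i) + nlines D"
  unfolding cross_count_def crossing_set_def ..

lemma column_eq: "{q :: node. fst q = c} = {(c, True), (c, False)}"
  by (auto intro: prod_eqI)

lemma even_card_leaving_column:
  fixes M :: "node \<Rightarrow> node"
  assumes inv: "\<And>p. M (M p) = p" and nofix: "\<And>p. M p \<noteq> p"
  shows "even (card {q. fst q = c \<and> fst (M q) \<noteq> c})"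
proof -
  have col: "{q. fst q = c \<and> fst (M q) \<noteq> c} = {q \<in> {(c, True), (c, False)}. fst (M q) \<noteq> c}"
    using column_eq by blast
  show ?thesis
  proof (cases "M (c, True) = (c, False)")
    case True
    then have "M (c, False) = (c, True)" using inv by metis
    then have "fst (M (c, u)) = c" for u using True by (cases u) auto
    then have none: "{q \<in> {(c, True), (c, False)}. fst (M q) \<noteq> c} = {}" by auto
    show ?thesis unfolding col none by simp
  next
    case False
    then have "M (c, False) \<noteq> (c, True)" using inv by metis
    then have "fst (M (c, u)) \<noteq> c" for u
      using False nofix[of "(c, u)"] by (cases u) (auto simp: prod_eq_iff)
    then have both: "{q \<in> {(c, True), (c, False)}. fst (M q) \<noteq> c} = {(c, True), (c, False)}"
      by auto
    show ?thesis unfolding col both by simp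
  qed
qed

text \<open>Moving the cut from i to i + 1 loses the edges ending in column i + 1 from the left and
  gains those leaving it to the right; together these are the nodes of column i + 1 not joined
  to each other, and there are 0 or 2 of them.\<close>
lemma even_card_crossing_set_succ:
  fixes M :: "node \<Rightarrow> node"
  assumes inv: "\<And>p. M (M p) = p" and nofix: "\<And>p. M p \<noteq> p"
    and fin: "finite (crossing_set M i)"
  shows "even (card (crossing_set M (i + 1))) \<longleftrightarrow> even (card (crossing_set M i))"
proof -
  define L where "L = {p. fst p \<le> i \<and> fst (M p) = i + 1}"
  define L' where "L' = {q. fst q = i + 1 \<and> fst (M q) \<le> i}"
  define R where "R = {p. fst p = i + 1 \<and> i + 1 < fst (M p)}"
  have step: "crossing_set M (i + 1) = (crossing_set M i - L) \<union> R"
    and L_sub: "L \<subseteq> crossing_set M i" and R_disj: "R \<inter> crossing_set M i = {}"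
    unfolding crossing_set_def L_def R_def by auto
  have fin_col: "finite {q :: node. fst q = i + 1}" using column_eq by simp
  have finR: "finite R" and finL': "finite L'"
    unfolding R_def L'_def by (auto intro: finite_subset[OF _ fin_col])
  have finL: "finite L" using L_sub fin finite_subset by blast
  have "M ` L' = L"
  proof (intro equalityI subsetI)
    fix p assume "p \<in> M ` L'" then show "p \<in> L" unfolding L'_def L_def using inv by auto
  next
    fix p assume "p \<in> L" then have "M p \<in> L'" unfolding L'_def L_def using inv by auto
    then show "p \<in> M ` L'" using inv[of p] by (metis image_eqI)
  qed
  moreover have "inj M" using inv by (metis injI)
  ultimately have cardL: "card L = card L'" by (metis card_image inj_on_subset top_greatest)
  have "L' \<union> R = {q. fst q = i + 1 \<and> fst (M q) \<noteq> i + 1}" "L' \<inter> R = {}"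
    unfolding L'_def R_def by auto
  then have "even (card L' + card R)"
    using even_card_leaving_column[OF inv nofix, of "i + 1"] card_Un_disjoint[OF finL' finR] by simp
  moreover have "card (crossing_set M (i + 1)) = card (crossing_set M i - L) + card R"
    unfolding step using R_disj fin finR by (subst card_Un_disjoint) auto
  moreover have "card (crossing_set M i - L) + card L = card (crossing_set M i)"
    using card_Diff_subset[OF finL L_sub] card_mono[OF fin L_sub] by simp
  ultimately have "card (crossing_set M (i + 1)) + card L' = card (crossing_set M i) + card R"
    and "even (card L' + card R)" using cardL by simp_all
  moreover have "\<And>X Y l r :: nat. X + l = Y + r \<Longrightarrow> even (l + r) \<Longrightarrow> even X \<longleftrightarrow> even Y"
    by presburger
  ultimately show ?thesis by blast
qed

lemma even_card_crossing_set_iff: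
  fixes M :: "node \<Rightarrow> node"
  assumes inv: "\<And>p. M (M p) = p" and nofix: "\<And>p. M p \<noteq> p"
    and fin: "\<And>i. finite (crossing_set M i)"
  shows "even (card (crossing_set M i)) \<longleftrightarrow> even (card (crossing_set M 0))"
proof (induction i rule: int_induct[where k=0])
  case (step1 i)
  then show ?case using even_card_crossing_set_succ[OF inv nofix fin, of i] by simp
next
  case (step2 i)
  then show ?case using even_card_crossing_set_succ[OF inv nofix fin, of "i - 1"] by simp
qed simp

lemma finite_crossing_set:
  fixes M :: "node \<Rightarrow> node"
  assumes "\<And>p. \<bar>fst (M p) - fst p\<bar> \<le> C"
  shows "finite (crossing_set M i)"
proof (rule finite_subset)
  show "crossing_set M i \<subseteq> {i - C..i} \<times> UNIV"
  proof
    fix p assume "p \<in> crossing_set M i"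
    then have "fst p \<le> i" "i < fst (M p)" unfolding crossing_set_def by auto
    then show "p \<in> {i - C..i} \<times> UNIV" using assms[of p] by (cases p) auto
  qed
qed simp

definition arcs_over_cut :: "nat \<Rightarrow> (int \<Rightarrow> int) \<Rightarrow> int set" where
  "arcs_over_cut n A = {x. \<not> fixed_mod n A x \<and> x \<le> 0 \<and> 0 < partner n A x}"

lemma (in annular_inv) finite_arcs_over_cut: "finite (arcs_over_cut n A)"
proof (rule finite_subset)
  show "arcs_over_cut n A \<subseteq> {- int n..0}"
    unfolding arcs_over_cut_def using partner_dist by fastforce
qed simp

context admissible_pair
begin

lemma vertical_drift_bounded: "\<exists>C. \<forall>k. \<bar>b (k - s) - a k\<bar> \<le> C"
proof -
  define t where "t = int (card (fixpts n A))"
  define h where "h k = \<bar>b (k - s) - a k\<bar>" for k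
  have periodic: "h k = h (k mod t)" for k
  proof -
    have "k - s = (k mod t - s) + k div t * int (card (fixpts n B))"
      using mod_div_mult_eq[of k t] unfolding t_def same_card by linarith
    moreover have "k = k mod t + k div t * int (card (fixpts n A))"
      using mod_div_mult_eq[of k t] unfolding t_def by linarith
    ultimately have "b (k - s) = b (k mod t - s) + k div t * int n"
      and "a k = a (k mod t) + k div t * int n"
      using EB.enum_shift EA.enum_shift by metis+
    then show ?thesis unfolding h_def by simp
  qed
  have "h k \<le> Max (h ` {0..<t})" for k
    unfolding periodic[of k] using EA.card_pos t_def by (intro Max_ge) auto
  then show ?thesis unfolding h_def by blast
qed

lemma match_bounded: "\<exists>C. \<forall>p. \<bar>fst (M s p) - fst p\<bar> \<le> C"
proof -
  obtain C where C: "\<And>k. \<bar>b (k - s) - a k\<bar> \<le> C" using vertical_drift_bounded by blast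
  have "\<bar>fst (M s (x, u)) - x\<bar> \<le> C + int n" for x u
  proof -
    have "0 \<le> C" using C[of 0] by linarith
    moreover have "\<bar>b (ai x - s) - a (ai x)\<bar> \<le> C" "\<bar>b ((bi x + s) - s) - a (bi x + s)\<bar> \<le> C"
      using C by blast+
    ultimately show ?thesis using A.partner_dist[of x] B.partner_dist[of x] a_ai[of x] b_bi[of x]
      by (cases u) (auto simp: match_top match_bot abs_minus_commute)
  qed
  then show ?thesis by fastforce
qed

lemma crossing_set_zero_subset: "crossing_set (M s) 0 \<subseteq>
    ((\<lambda>x. (x, True)) ` arcs_over_cut n A \<union> (\<lambda>k. (a k, True)) ` {s + 1..0})
    \<union> ((\<lambda>x. (x, False)) ` arcs_over_cut n B \<union> (\<lambda>m. (b m, False)) ` {1 - s..0})"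
  (is "_ \<subseteq> (?T \<union> ?VT) \<union> (?B \<union> ?VB)")
proof
  fix p assume p: "p \<in> crossing_set (M s) 0"
  obtain x u where pe: "p = (x, u)" by (cases p)
  have h: "x \<le> 0" "0 < fst (M s (x, u))" using p pe unfolding crossing_set_def by auto
  show "p \<in> (?T \<union> ?VT) \<union> (?B \<union> ?VB)"
  proof (cases u)
    case True
    show ?thesis
    proof (cases "fixed_mod n A x")
      case fx: True
      have "ai x \<le> 0" using EA.enum_pos_iff[of "ai x"] a_ai[OF fx] h by simp
      moreover have "1 \<le> ai x - s" using EB.enum_pos_iff[of "ai x - s"] h match_top fx True by simp
      ultimately have "p \<in> ?VT" using pe True a_ai[OF fx] by (intro rev_image_eqI[of "ai x"]) auto
      then show ?thesis by blast
    next
      case False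
      then show ?thesis using pe True h match_top unfolding arcs_over_cut_def by auto
    qed
  next
    case False
    show ?thesis
    proof (cases "fixed_mod n B x")
      case fx: True
      have "bi x \<le> 0" using EB.enum_pos_iff[of "bi x"] b_bi[OF fx] h by simp
      moreover have "1 \<le> bi x + s" using EA.enum_pos_iff[of "bi x + s"] h match_bot fx False by simp
      ultimately have "p \<in> ?VB" using pe False b_bi[OF fx] by (intro rev_image_eqI[of "bi x"]) auto
      then show ?thesis by blast
    next
      case nf: False
      then show ?thesis using pe False h match_bot unfolding arcs_over_cut_def by auto
    qed
  qed
qed

lemma crossing_set_zero: "crossing_set (M s) 0 =
    ((\<lambda>x. (x, True)) ` arcs_over_cut n A \<union> (\<lambda>k. (a k, True)) ` {s + 1..0})
    \<union> ((\<lambda>x. (x, False)) ` arcs_over_cut n B \<union> (\<lambda>m. (b m, False)) ` {1 - s..0})"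
  (is "_ = (?T \<union> ?VT) \<union> (?B \<union> ?VB)")
proof (rule equalityI[OF crossing_set_zero_subset subsetI])
  fix p assume "p \<in> (?T \<union> ?VT) \<union> (?B \<union> ?VB)"
  moreover have "p \<in> crossing_set (M s) 0" if top: "p \<in> ?VT"
  proof -
    obtain k where k: "p = (a k, True)" "s + 1 \<le> k" "k \<le> 0" using top by auto
    have "a k \<le> 0" "b (k - s) \<ge> 1"
      using EA.enum_pos_iff[of k] EB.enum_pos_iff[of "k - s"] k by simp_all
    then show ?thesis using k match_top fixed_a ai_a unfolding crossing_set_def by simp
  qed
  moreover have "p \<in> crossing_set (M s) 0" if bot: "p \<in> ?VB"
  proof -
    obtain m where m: "p = (b m, False)" "1 - s \<le> m" "m \<le> 0" using bot by auto
    have "b m \<le> 0" "a (m + s) \<ge> 1"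
      using EB.enum_pos_iff[of m] EA.enum_pos_iff[of "m + s"] m by simp_all
    then show ?thesis using m match_bot fixed_b bi_b unfolding crossing_set_def by simp
  qed
  moreover have "p \<in> crossing_set (M s) 0" if "p \<in> ?T \<union> ?B"
    using that match_top match_bot unfolding crossing_set_def arcs_over_cut_def by auto
  ultimately show "p \<in> crossing_set (M s) 0" by blast
qed

lemma card_crossing_set_zero:
  "card (crossing_set (M s) 0) = card (arcs_over_cut n A) + card (arcs_over_cut n B) + nat \<bar>s\<bar>"
proof -
  have inj: "inj (\<lambda>x::int. (x, u))" "inj (\<lambda>k. (a k, True))" "inj (\<lambda>m. (b m, False))" for u
    by (auto intro: injI simp: EA.enum_inj EB.enum_inj)
  have fin: "finite (arcs_over_cut n A)" "finite (arcs_over_cut n B)"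
    using A.finite_arcs_over_cut B.finite_arcs_over_cut .
  have top: "card ((\<lambda>x. (x, True)) ` arcs_over_cut n A \<union> (\<lambda>k. (a k, True)) ` {s + 1..0})
      = card (arcs_over_cut n A) + nat (- s)"
    using fixed_a fin card_image[OF inj_on_subset[OF inj(1)]]
      card_image[OF inj_on_subset[OF inj(2)]]
    unfolding arcs_over_cut_def by (subst card_Un_disjoint) auto
  have bot: "card ((\<lambda>x. (x, False)) ` arcs_over_cut n B \<union> (\<lambda>m. (b m, False)) ` {1 - s..0})
      = card (arcs_over_cut n B) + nat s"
    using fixed_b fin card_image[OF inj_on_subset[OF inj(1)]]
      card_image[OF inj_on_subset[OF inj(3)]]
    unfolding arcs_over_cut_def by (subst card_Un_disjoint) auto
  show ?thesis unfolding crossing_set_zero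
    by (subst card_Un_disjoint) (use fin top bot in auto)
qed

lemma in_O_diagram_iff:
  "in_O (triple_diagram n A B s) \<longleftrightarrow>
    even (int (card (arcs_over_cut n A) + card (arcs_over_cut n B)) + s)"
proof -
  obtain C where "\<forall>p. \<bar>fst (M s p) - fst p\<bar> \<le> C" using match_bounded by blast
  then have fin: "\<And>i. finite (crossing_set (M s) i)" using finite_crossing_set by blast
  have "in_O (triple_diagram n A B s) \<longleftrightarrow> (\<forall>i. even (card (crossing_set (M s) i)))"
    unfolding in_O_def cross_count_eq match_def nlines_def triple_diagram_def by simp
  also have "\<dots> \<longleftrightarrow> even (card (crossing_set (M s) 0))"
    using even_card_crossing_set_iff[OF match_involutive match_no_fixpt fin] by blast
  also have "\<dots> \<longleftrightarrow> even (int (card (arcs_over_cut n A) + card (arcs_over_cut n B)) + \<bar>s\<bar>)"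
    unfolding card_crossing_set_zero by (simp add: even_add even_nat_iff)
  also have "\<dots> \<longleftrightarrow> even (int (card (arcs_over_cut n A) + card (arcs_over_cut n B)) + s)"
    by (cases "s \<ge> 0") (simp_all add: even_add)
  finally show ?thesis .
qed

end

section \<open>Diagrams with a vertical edge\<close>

definition swap_side :: "node \<Rightarrow> node" where
  "swap_side p = (fst p, \<not> snd p)"

definition flip :: "diagram \<Rightarrow> diagram" where
  "flip D = (swap_side \<circ> match D \<circ> swap_side, nlines D)"

lemma match_flip: "match (flip D) p = swap_side (match D (swap_side p))"
  unfolding flip_def match_def by simp

lemma swap_side_swap_side [simp]: "swap_side (swap_side p) = p"
  unfolding swap_side_def by simp

lemma swap_side_eq_iff: "swap_side p = q \<longleftrightarrow> p = swap_side q"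
  unfolding swap_side_def by auto

lemma bless_swap_side: "bless (swap_side p) (swap_side q) \<longleftrightarrow> bless q p"
  unfolding swap_side_def by (cases p; cases q; cases "snd p"; cases "snd q") auto

lemma noncrossing_flip:
  assumes inv: "\<And>p. M (M p) = p" and nc: "noncrossing M"
  shows "noncrossing (swap_side \<circ> M \<circ> swap_side)"
  unfolding noncrossing_def
proof (intro allI impI notI)
  fix p q
  let ?P = "swap_side p" and ?Q = "swap_side q"
  assume "bless p ((swap_side \<circ> M \<circ> swap_side) p) \<and> bless q ((swap_side \<circ> M \<circ> swap_side) q)"
    and "bless p q \<and> bless q ((swap_side \<circ> M \<circ> swap_side) p) \<and>
      bless ((swap_side \<circ> M \<circ> swap_side) p) ((swap_side \<circ> M \<circ> swap_side) q)"
  then have "bless (M ?P) ?P" "bless (M ?Q) ?Q" "bless ?Q ?P" "bless (M ?P) ?Q" "bless (M ?Q)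
    (M ?P)"
    by (metis bless_swap_side comp_apply swap_side_swap_side)+
  then show False
    using nc[unfolded noncrossing_def, rule_format, of "M ?Q" "M ?P"] inv by simp
qed

lemma has_vertical_iff_top: "(\<forall>p. match D (match D p) = p) \<Longrightarrow>
    has_vertical D \<longleftrightarrow> (\<exists>x. \<not> snd (match D (x, True)))"
  unfolding has_vertical_def by (metis prod.collapse snd_conv)

lemma has_vertical_flip:
  "(\<forall>p. match D (match D p) = p) \<Longrightarrow> has_vertical (flip D) \<longleftrightarrow> has_vertical D"
  using has_vertical_iff_top[of D] unfolding has_vertical_def match_flip swap_side_def by simp

lemma affine_flip:
  assumes aff: "is_affine_diagram n D"
  shows "is_affine_diagram n (flip D)"
proof -
  have inv: "\<forall>p. match D (match D p) = p" and nofix: "\<forall>p. match D p \<noteq> p"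
    and per: "\<forall>x s. match D (x + int n, s) = (fst (match D (x, s)) + int n, snd (match D (x, s)))"
    and nc: "noncrossing (match D)" and lines: "nlines D > 0 \<longrightarrow> \<not> has_vertical D"
    using aff unfolding is_affine_diagram_def noncrossing_def by auto
  have "\<forall>p. match (flip D) p \<noteq> p \<and> match (flip D) (match (flip D) p) = p"
    unfolding match_flip swap_side_eq_iff swap_side_swap_side using inv nofix by blast
  moreover have "\<forall>x s. match (flip D) (x + int n, s) =
      (fst (match (flip D) (x, s)) + int n, snd (match (flip D) (x, s)))"
    using per unfolding match_flip swap_side_def by simp
  moreover have "noncrossing (match (flip D))"
    using noncrossing_flip[OF _ nc] inv unfolding flip_def match_def by simp
  moreover have "nlines (flip D) > 0 \<longrightarrow> \<not> has_vertical (flip D)"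
    using lines has_vertical_flip[OF inv] unfolding flip_def nlines_def by simp
  ultimately show ?thesis unfolding is_affine_diagram_def noncrossing_def by blast
qed

lemma S1_flip: "S1 n (flip D) = S2 n D"
  unfolding S1_def S2_def S_side_def match_flip swap_side_def by (auto simp: fun_eq_iff)

lemma image_eq_if_involution_maps_into:
  assumes "\<And>x. x \<in> S \<Longrightarrow> f x \<in> S" and "\<And>x. f (f x) = x"
  shows "f ` S = S"
proof
  show "f ` S \<subseteq> S" using assms(1) by blast
  show "S \<subseteq> f ` S"
  proof
    fix x assume "x \<in> S"
    then have "f x \<in> S" "f (f x) = x" using assms by auto
    then show "x \<in> f ` S" by (metis image_eqI)
  qed
qed

locale vertical_diagram =
  fixes n :: nat and D :: diagram
  assumes affine: "is_affine_diagram n D" and vertical: "has_vertical D" and n_pos: "n > 0"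
begin

abbreviation "M \<equiv> match D"
abbreviation "A \<equiv> S1 n D"
abbreviation "vertical_top x \<equiv> \<not> snd (M (x, True))"

lemma match_involutive: "M (M p) = p"
  using affine unfolding is_affine_diagram_def by blast

lemma match_no_fixpt: "M p \<noteq> p"
  using affine unfolding is_affine_diagram_def by blast

lemma match_eq_sym: "M p = q \<Longrightarrow> M q = p"
  using match_involutive by metis

lemma match_periodic: "M (x + int n, s) = (fst (M (x, s)) + int n, snd (M (x, s)))"
  using affine unfolding is_affine_diagram_def by blast

lemma no_cross: "no_cross_top M" "no_cross_top_vert M" "no_cross_verts M"
  using affine no_cross_if_noncrossing unfolding is_affine_diagram_def noncrossing_def by blast+

lemma no_lines: "nlines D = 0"
  using affine vertical unfolding is_affine_diagram_def by auto

lemma match_shift: "M (x + k * int n, s) = (fst (M (x, s)) + k * int n, snd (M (x, s)))"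
proof (induction k rule: int_induct[where k=0])
  case (step1 i)
  have "M (x + (i + 1) * int n, s) = M ((x + i * int n) + int n, s)" by (simp add: algebra_simps)
  also have "\<dots> = (fst (M (x + i * int n, s)) + int n, snd (M (x + i * int n, s)))"
    by (rule match_periodic)
  finally show ?case using step1 by (simp add: algebra_simps)
next
  case (step2 i)
  have "(fst (M (x + (i - 1) * int n, s)) + int n, snd (M (x + (i - 1) * int n, s)))
      = M ((x + (i - 1) * int n) + int n, s)"
    by (rule match_periodic[symmetric])
  also have "\<dots> = (fst (M (x, s)) + i * int n, snd (M (x, s)))"
    using step2.IH by (simp add: algebra_simps)
  finally have "fst (M (x + (i - 1) * int n, s)) = fst (M (x, s)) + (i - 1) * int n"
    "snd (M (x + (i - 1) * int n, s)) = snd (M (x, s))"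
    by (auto simp: algebra_simps)
  then show ?case by (simp add: prod_eq_iff)
qed simp

lemma top_arcs_nested:
  "M (u, True) = (v, True) \<Longrightarrow> M (x, True) = (z, True) \<Longrightarrow> u < x \<Longrightarrow> x < v \<Longrightarrow> v < z \<Longrightarrow> False"
proof -
  assume h: "M (u, True) = (v, True)" "M (x, True) = (z, True)" "u < x" "x < v" "v < z"
  have "M (z, True) = (x, True)" "M (v, True) = (u, True)"
    using match_eq_sym[OF h(2)] match_eq_sym[OF h(1)] by auto
  then show False
    using no_cross(1)[unfolded no_cross_top_def, rule_format,
        where a=x and b=z and c=u and d=v] h
    by auto
qed

lemma top_arc_short: "M (x, True) = (y, True) \<Longrightarrow> x < y \<Longrightarrow> y < x + int n"
proof (rule ccontr)
  assume h: "M (x, True) = (y, True)" "x < y" "\<not> y < x + int n"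
  have shifted: "M (x + int n, True) = (y + int n, True)" using match_periodic[of x True] h by simp
  show False
  proof (cases "y = x + int n")
    case True
    then show False using match_eq_sym[OF h(1)] shifted n_pos by simp
  next
    case False
    then show False using top_arcs_nested[OF h(1) shifted] h n_pos by simp
  qed
qed

lemma top_arc_dist:
  assumes h: "M (x, True) = (y, True)"
  shows "y \<noteq> x \<and> \<bar>y - x\<bar> < int n"
proof -
  have "y \<noteq> x" using h match_no_fixpt by auto
  moreover have "\<bar>y - x\<bar> < int n"
  proof (cases "x < y")
    case True then show ?thesis using top_arc_short[OF h] by simp
  next
    case False
    then show ?thesis using top_arc_short[OF match_eq_sym[OF h]] \<open>y \<noteq> x\<close> by simp
  qed
  ultimately show ?thesis ..
qed

lemma vertical_top_shift: "vertical_top (x + k * int n) \<longleftrightarrow> vertical_top x"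
  using match_shift by simp

lemma vertical_top_in_window: "\<exists>f. vertical_top f \<and> z < f \<and> f \<le> z + int n"
proof -
  obtain x where "snd (M (x, False))" using vertical unfolding has_vertical_def by auto
  then obtain y where "M (x, False) = (y, True)" by (metis prod.collapse)
  then have "M (y, True) = (x, False)" by (rule match_eq_sym)
  then have y: "vertical_top y" by simp
  define k where "k = (z + int n - y) div int n"
  define r where "r = (z + int n - y) mod int n"
  have "z + int n - y = k * int n + r" "0 \<le> r" "r < int n"
    using k_def r_def n_pos by simp_all
  moreover have "vertical_top (y + k * int n)" using vertical_top_shift y by blast
  ultimately show ?thesis by (intro exI[of _ "y + k * int n"]) auto
qed

lemma no_vertical_under_top_arc:
  assumes h: "M (c, True) = (d, True)" and x: "c < x" "x < d"
  shows "\<not> vertical_top x"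
proof
  assume "vertical_top x"
  then obtain y where "M (x, True) = (y, False)" by (metis prod.collapse)
  then have "M (y, False) = (x, True)" by (rule match_eq_sym)
  then show False
    using no_cross(2)[unfolded no_cross_top_vert_def, rule_format,
        where c=c and d=d and y=y and x=x] match_eq_sym[OF h] x
    by auto
qed

lemma S1_eq: "i \<in> {1..int n} \<Longrightarrow> A i = (if vertical_top i then i else residue n (fst (M (i, True))))"
  unfolding S1_def S_side_def residue_def by auto

lemma S1_outside: "i \<notin> {1..int n} \<Longrightarrow> A i = i"
  unfolding S1_def S_side_def by auto

lemma top_arc_of: "\<not> vertical_top x \<Longrightarrow> M (x, True) = (fst (M (x, True)), True)"
  by (metis prod.collapse)

lemma top_arc_residue_ne: "M (x, True) = (y, True) \<Longrightarrow> residue n y \<noteq> residue n x"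
proof
  assume h: "M (x, True) = (y, True)" and e: "residue n y = residue n x"
  then have "x = y + (block n x - block n y) * int n" using residue_eq_iff by metis
  moreover have "y \<noteq> x" "\<bar>y - x\<bar> < int n" using top_arc_dist[OF h] by auto
  ultimately have "block n x - block n y \<noteq> 0" "\<bar>(block n x - block n y) * int n\<bar> < int n" by auto
  then show False using n_pos by (simp add: abs_mult)
qed

lemma S1_fixed_iff: "i \<in> {1..int n} \<Longrightarrow> A i = i \<longleftrightarrow> vertical_top i"
  using S1_eq top_arc_residue_ne[OF top_arc_of] residue_id by fastforce

lemma S1_maps_window: "i \<in> {1..int n} \<Longrightarrow> A i \<in> {1..int n}"
  using S1_eq residue_in_window[OF n_pos] by auto

lemma S1_involutive: "A (A i) = i"
proof (cases "i \<in> {1..int n} \<and> \<not> vertical_top i")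
  case True
  then have i: "i \<in> {1..int n}" and nv: "\<not> vertical_top i" by auto
  define y where "y = fst (M (i, True))"
  have "M (y, True) = (i, True)" using match_eq_sym[OF top_arc_of[OF nv]] y_def by simp
  moreover have "residue n y = y + (- block n y) * int n" using residue_block[of y n] by simp
  ultimately have "M (residue n y, True) = (i + (- block n y) * int n, True)"
    using match_shift[of y "- block n y" True] by simp
  then have "A (residue n y) = residue n (i + (- block n y) * int n)"
    using S1_eq[OF residue_in_window[OF n_pos]] by simp
  also have "\<dots> = i" by (simp only: residue_shift residue_id[OF i])
  finally show ?thesis using S1_eq[OF i] nv y_def by simp
next
  case False
  then have "A i = i" using S1_outside S1_eq by (cases "i \<in> {1..int n}") auto
  then show ?thesis by simp
qed

lemma S1_invols: "A \<in> invols n"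
  unfolding invols_def using S1_outside S1_maps_window S1_involutive by auto

lemma fixpts_S1: "fixpts n A = {i \<in> {1..int n}. vertical_top i}"
  unfolding fixpts_def using S1_fixed_iff by auto

lemma fixpts_S1_nonempty: "fixpts n A \<noteq> {}"
  using vertical_top_in_window[of 0] unfolding fixpts_S1 by auto

lemma fixed_mod_S1_iff: "fixed_mod n A x \<longleftrightarrow> vertical_top x"
proof -
  have "vertical_top x \<longleftrightarrow> vertical_top (residue n x)"
    using vertical_top_shift[of "residue n x" "block n x"] residue_block[of x n] by simp
  then show ?thesis
    unfolding fixed_mod_def using S1_fixed_iff[OF residue_in_window[OF n_pos]] by simp
qed

text \<open>A top arc is shorter than n, so its far end is A i shifted by at most one period.\<close>
lemma top_arc_candidates:
  assumes i: "i \<in> {1..int n}" and nv: "\<not> vertical_top i"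
  shows "fst (M (i, True)) = A i \<or> (fst (M (i, True)) = A i - int n \<and> i < A i) \<or>
         (fst (M (i, True)) = A i + int n \<and> A i < i)"
proof -
  define y where "y = fst (M (i, True))"
  define k where "k = block n y"
  have j: "A i \<in> {1..int n}" "A i = residue n y"
    using S1_eq[OF i] nv S1_maps_window[OF i] y_def by auto
  have yk: "y = A i + k * int n" using residue_block[of y n] j k_def by simp
  have d: "\<bar>y - i\<bar> < int n" using top_arc_dist[OF top_arc_of[OF nv]] y_def by simp
  have bounds: "y - i < int n" "i - y < int n" "1 \<le> i" "i \<le> int n" "1 \<le> A i" "A i \<le> int n"
    using d i j by auto
  have "k \<ge> -1"
  proof (rule ccontr)
    assume "\<not> k \<ge> -1"
    then have "k * int n \<le> (-2) * int n" by (intro mult_right_mono) auto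
    then show False using yk bounds by linarith
  qed
  moreover have "k \<le> 1"
  proof (rule ccontr)
    assume "\<not> k \<le> 1"
    then have "2 * int n \<le> k * int n" by (intro mult_right_mono) auto
    then show False using yk bounds by linarith
  qed
  ultimately have "k = -1 \<or> k = 0 \<or> k = 1" by auto
  then show ?thesis using yk d y_def by auto
qed

end

context vertical_diagram
begin

lemma S1_top_arc_inside:
  assumes i: "i \<in> {1..int n}" and j: "j \<in> {1..int n}" and ij: "i < j"
    and h: "M (i, True) = (j, True)"
  shows "A ` {i..j} = {i..j} \<and> {i..j} \<inter> fixpts n A = {}"
proof -
  have h': "M (j, True) = (i, True)" using match_eq_sym[OF h] .
  have Ai: "A i = j" and Aj: "A j = i"
    using S1_eq[OF i] S1_eq[OF j] h h' residue_id[OF i] residue_id[OF j] by simp_all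
  have inner: "\<not> vertical_top x \<and> i < fst (M (x, True)) \<and> fst (M (x, True)) < j"
    if x: "i < x" "x < j" for x
  proof -
    have nvx: "\<not> vertical_top x" using no_vertical_under_top_arc[OF h x] .
    define z where "z = fst (M (x, True))"
    have hx: "M (x, True) = (z, True)" using top_arc_of[OF nvx] z_def by simp
    have "z \<noteq> i" "z \<noteq> j" using match_eq_sym[OF hx] h h' x by auto
    moreover have "\<not> z < i" using top_arcs_nested[OF match_eq_sym[OF hx] h] x by auto
    moreover have "\<not> j < z" using top_arcs_nested[OF h hx] x by auto
    ultimately show ?thesis using nvx z_def by auto
  qed
  have "A x \<in> {i..j}" if x: "x \<in> {i..j}" for x
  proof (cases "x = i \<or> x = j")
    case True
    then show ?thesis using Ai Aj ij by auto
  next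
    case False
    then have x': "i < x" "x < j" using x by auto
    then have "x \<in> {1..int n}" "fst (M (x, True)) \<in> {1..int n}" using inner[OF x'] i j by auto
    then show ?thesis using inner[OF x'] S1_eq residue_id by auto
  qed
  then have "A ` {i..j} = {i..j}" using image_eq_if_involution_maps_into S1_involutive by blast
  moreover have "{i..j} \<inter> fixpts n A = {}"
    using inner h h' unfolding fixpts_S1 by (auto simp: le_less)
  ultimately show ?thesis ..
qed

lemma S1_under_top_arc_around:
  assumes i: "i \<in> {1..int n}" and j: "j \<in> {1..int n}"
    and h: "M (i, True) = (j - int n, True)"
    and x: "i < x" "x < j" "\<not> vertical_top x"
  shows "A x \<in> {i..j}"
proof -
  have h': "M (j - int n, True) = (i, True)" using match_eq_sym[OF h] .
  have h'': "M (j, True) = (i + int n, True)" using match_periodic[of "j - int n" True] h' by simp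
  have h3: "M (i + int n, True) = (j, True)" using match_eq_sym[OF h''] .
  define z where "z = fst (M (x, True))"
  have hx: "M (x, True) = (z, True)" using top_arc_of[OF x(3)] z_def by simp
  have hz: "M (z, True) = (x, True)" using match_eq_sym[OF hx] .
  have "z \<noteq> j - int n" using hz h' x by auto
  moreover have "z \<noteq> i" using hz h x i j by auto
  moreover have "z \<noteq> j" using hz h'' x i j by auto
  moreover have "z \<noteq> i + int n" using hz h3 x by auto
  moreover have "\<not> (j - int n < z \<and> z < i)" using top_arcs_nested[OF h' hz] x by auto
  moreover have "\<not> (j < z \<and> z < i + int n)" using top_arcs_nested[OF hx h''] x by auto
  moreover have "\<bar>z - x\<bar> < int n" using top_arc_dist[OF hx] by simp
  ultimately consider "i < z + int n" "z + int n < j" | "i < z" "z < j"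
    | "i < z - int n" "z - int n < j"
    using x by linarith
  then have "residue n z \<in> {i<..<j}"
  proof cases
    case 1
    then have "residue n (z + int n) = z + int n" using i j by (intro residue_id) auto
    then show ?thesis using 1 residue_shift[of n z 1] by simp
  next
    case 2
    then show ?thesis using i j residue_id[of z n] by auto
  next
    case 3
    then have "residue n (z - int n) = z - int n" using i j by (intro residue_id) auto
    then show ?thesis using 3 residue_shift[of n "z - int n" 1] by simp
  qed
  then show ?thesis using S1_eq[of x] x i j z_def by auto
qed

lemma S1_top_arc_around:
  assumes i: "i \<in> {1..int n}" and j: "j \<in> {1..int n}" and ij: "i < j"
    and h: "M (i, True) = (j - int n, True)"
  shows "A ` {i..j} = {i..j} \<and> fixpts n A \<subseteq> {i..j}"
proof -
  have h': "M (j - int n, True) = (i, True)" using match_eq_sym[OF h] .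
  have h'': "M (j, True) = (i + int n, True)" using match_periodic[of "j - int n" True] h' by simp
  have Ai: "A i = j" and Aj: "A j = i"
    using S1_eq[OF i] S1_eq[OF j] h h'' residue_shift[of n j "-1"] residue_shift[of n i 1]
      residue_id[OF i] residue_id[OF j] by simp_all
  have "A x \<in> {i..j}" if x: "x \<in> {i..j}" for x
  proof (cases "x = i \<or> x = j")
    case True
    then show ?thesis using Ai Aj ij by auto
  next
    case False
    then have "i < x" "x < j" using x by auto
    then show ?thesis
      using S1_under_top_arc_around[OF i j h, of x] S1_fixed_iff[of x] i j
      by (cases "vertical_top x") auto
  qed
  then have "A ` {i..j} = {i..j}" using image_eq_if_involution_maps_into S1_involutive by blast
  moreover have "fixpts n A \<subseteq> {i..j}"
  proof
    fix f assume "f \<in> fixpts n A"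
    then have f: "1 \<le> f" "f \<le> int n" "vertical_top f" unfolding fixpts_S1 by auto
    have "\<not> f < i" using no_vertical_under_top_arc[OF h', of f] f j by auto
    moreover have "\<not> j < f"
      using no_vertical_under_top_arc[OF h', of "f - int n"] vertical_top_shift[of f "-1"] f i
      by auto
    ultimately show "f \<in> {i..j}" by simp
  qed
  ultimately show ?thesis ..
qed

lemma S1_Ann: "A \<in> Ann n"
  unfolding Ann_def
proof (rule CollectI, rule conjI[OF S1_invols], intro allI impI)
  fix i j assume "i \<in> {1..int n} \<and> j \<in> {1..int n} \<and> i < j \<and> A i = j"
  then have i: "i \<in> {1..int n}" and j: "j \<in> {1..int n}" and ij: "i < j" and Ai: "A i = j" by auto
  have nv: "\<not> vertical_top i" using S1_fixed_iff[OF i] Ai ij by auto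
  have "M (i, True) = (j, True) \<or> M (i, True) = (j - int n, True)"
    using top_arc_candidates[OF i nv] top_arc_of[OF nv] Ai ij by auto
  then show "A ` {i..j} = {i..j} \<and> ({i..j} \<inter> fixpts n A = {} \<or> fixpts n A \<subseteq> {i..j})"
    using S1_top_arc_inside[OF i j ij] S1_top_arc_around[OF i j ij] by blast
qed

lemma top_arc_partner_base:
  assumes i: "i \<in> {1..int n}" and nv: "\<not> vertical_top i"
  shows "fst (M (i, True)) = partner_base n A i"
proof -
  let ?j = "A i"
  have j: "?j \<in> {1..int n}" using S1_maps_window[OF i] .
  have ji: "?j \<noteq> i" using S1_fixed_iff[OF i] nv by simp
  have h: "M (i, True) = (fst (M (i, True)), True)" using top_arc_of[OF nv] .
  have fixed_between: "\<exists>f\<in>{min i ?j..max i ?j}. A f = f" if "fixpts n A \<subseteq> {min i ?j..max i ?j}"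
    using that fixpts_S1_nonempty unfolding fixpts_def by blast
  consider "fst (M (i, True)) = ?j" | "fst (M (i, True)) = ?j - int n" "i < ?j"
    | "fst (M (i, True)) = ?j + int n" "?j < i"
    using top_arc_candidates[OF i nv] by blast
  then show ?thesis
  proof cases
    case 1
    then have arc: "M (i, True) = (?j, True)" using h by simp
    then have "{min i ?j..max i ?j} \<inter> fixpts n A = {}"
      using S1_top_arc_inside[OF i j] S1_top_arc_inside[OF j i _ match_eq_sym[OF arc]] ji
      by (cases "i < ?j") auto
    then have "\<forall>f\<in>{min i ?j..max i ?j}. A f \<noteq> f"
      using i j unfolding fixpts_def by (auto simp: min_def max_def split: if_splits)
    then show ?thesis unfolding partner_base_def using 1 by simp
  next
    case 2
    then have "fixpts n A \<subseteq> {min i ?j..max i ?j}"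
      using S1_top_arc_around[OF i j] h by auto
    then show ?thesis using fixed_between 2 unfolding partner_base_def by auto
  next
    case 3
    then have "M (?j + int n, True) = (i, True)" using match_eq_sym[OF h] by simp
    then have "M (?j, True) = (i - int n, True)"
      using match_periodic[of ?j True] by (auto simp: prod_eq_iff)
    then have "fixpts n A \<subseteq> {min i ?j..max i ?j}"
      using S1_top_arc_around[OF j i] 3 by auto
    then show ?thesis using fixed_between 3 unfolding partner_base_def by auto
  qed
qed

lemma top_arc_partner: "\<not> vertical_top x \<Longrightarrow> M (x, True) = (partner n A x, True)"
proof -
  assume nv: "\<not> vertical_top x"
  let ?i = "residue n x" and ?q = "block n x"
  have i: "?i \<in> {1..int n}" using residue_in_window[OF n_pos] .
  have x: "x = ?i + ?q * int n" using residue_block .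
  have nvi: "\<not> vertical_top ?i" using vertical_top_shift[of ?i ?q] x nv by simp
  have "M (x, True) = (fst (M (?i, True)) + ?q * int n, snd (M (?i, True)))"
    using match_shift[of ?i ?q True] x by simp
  also have "\<dots> = (partner_base n A ?i + ?q * int n, True)"
    using top_arc_partner_base[OF i nvi] nvi by simp
  finally show ?thesis unfolding partner_def .
qed

end

lemma strict_mono_surj_int_shift:
  fixes g :: "int \<Rightarrow> int"
  assumes mono: "strict_mono g" and surj: "surj g"
  shows "g k = k + g 0"
proof -
  have step: "g (k + 1) = g k + 1" for k
  proof (rule ccontr)
    assume "g (k + 1) \<noteq> g k + 1"
    then have gap: "g k + 1 < g (k + 1)" using mono[THEN strict_monoD, of k "k + 1"] by simp
    obtain j where j: "g j = g k + 1" using surj by (metis surjE)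
    have "k < j" using j strict_mono_less[OF mono, of k j] by simp
    moreover have "j < k + 1" using j gap strict_mono_less[OF mono, of j "k + 1"] by simp
    ultimately show False by simp
  qed
  show ?thesis
  proof (induction k rule: int_induct[where k=0])
    case (step1 i) then show ?case using step[of i] by simp
  next
    case (step2 i) then show ?case using step[of "i - 1"] by simp
  qed simp
qed

context vertical_diagram
begin

lemma flip_vertical_diagram: "vertical_diagram n (flip D)"
  unfolding vertical_diagram_def
  using affine_flip[OF affine] has_vertical_flip[of D] match_involutive vertical n_pos by blast

abbreviation "B \<equiv> S2 n D"

lemma vertical_top_flip: "\<not> snd (match (flip D) (y, True)) \<longleftrightarrow> snd (M (y, False))"
  unfolding match_flip swap_side_def by simp

lemma S2_Ann: "B \<in> Ann n"
  using vertical_diagram.S1_Ann[OF flip_vertical_diagram] S1_flip by simp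

lemma fixpts_S2_nonempty: "fixpts n B \<noteq> {}"
  using vertical_diagram.fixpts_S1_nonempty[OF flip_vertical_diagram] S1_flip by simp

lemma fixed_mod_S2_iff: "fixed_mod n B y \<longleftrightarrow> snd (M (y, False))"
  using vertical_diagram.fixed_mod_S1_iff[OF flip_vertical_diagram] S1_flip vertical_top_flip
  by simp

lemma bottom_arc_partner: "\<not> snd (M (y, False)) \<Longrightarrow> M (y, False) = (partner n B y, False)"
  using vertical_diagram.top_arc_partner[OF flip_vertical_diagram, of y] S1_flip vertical_top_flip
  unfolding match_flip swap_side_def by (simp add: prod_eq_iff)

lemma annular_S1: "annular_inv n A"
  unfolding annular_inv_def using S1_Ann fixpts_S1_nonempty by simp

lemma annular_S2: "annular_inv n B"
  unfolding annular_inv_def using S2_Ann fixpts_S2_nonempty by simp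

interpretation EA: window_subset n "fixpts n A"
  using annular_inv.window_subset_fixpts[OF annular_S1] .
interpretation EB: window_subset n "fixpts n B"
  using annular_inv.window_subset_fixpts[OF annular_S2] .

abbreviation "a \<equiv> periodic_enum n (fixpts n A)"
abbreviation "b \<equiv> periodic_enum n (fixpts n B)"
abbreviation "ai \<equiv> periodic_index n (fixpts n A)"
abbreviation "bi \<equiv> periodic_index n (fixpts n B)"

lemma vertical_top_a: "vertical_top (a k)"
  using fixed_mod_S1_iff annular_inv.fixed_mod_iff[OF annular_S1] EA.residue_enum by blast

lemma a_ai: "vertical_top x \<Longrightarrow> a (ai x) = x"
  using fixed_mod_S1_iff annular_inv.fixed_mod_iff[OF annular_S1] EA.enum_index by blast

lemma vertical_bottom_b: "snd (M (b k, False))"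
  using fixed_mod_S2_iff annular_inv.fixed_mod_iff[OF annular_S2] EB.residue_enum by blast

lemma b_bi: "snd (M (y, False)) \<Longrightarrow> b (bi y) = y"
  using fixed_mod_S2_iff annular_inv.fixed_mod_iff[OF annular_S2] EB.enum_index by blast

definition foot :: "int \<Rightarrow> int" where
  "foot x = fst (M (x, True))"

lemma vertical_edge_foot: "vertical_top x \<Longrightarrow> M (foot x, False) = (x, True)"
  unfolding foot_def by (metis match_eq_sym prod.collapse)

text \<open>Planarity forces this to be a translation of the indices, by minus the winding number.\<close>
definition foot_index :: "int \<Rightarrow> int" where
  "foot_index k = bi (foot (a k))"

lemma b_foot_index: "b (foot_index k) = foot (a k)"
  unfolding foot_index_def using b_bi vertical_edge_foot vertical_top_a by simp

lemma foot_index_strict_mono: "strict_mono foot_index"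
proof (rule strict_monoI)
  fix k k' :: int assume "k < k'"
  then have ak: "a k < a k'" using EA.enum_less_iff by blast
  have edges: "M (foot (a k), False) = (a k, True)" "M (foot (a k'), False) = (a k', True)"
    using vertical_edge_foot vertical_top_a by blast+
  then have "foot (a k) \<noteq> foot (a k')" using ak by auto
  moreover have "\<not> foot (a k') < foot (a k)"
    using no_cross(3)[unfolded no_cross_verts_def, rule_format,
        where y="foot (a k')" and x="a k'" and y'="foot (a k)" and x'="a k"] edges ak
    by auto
  ultimately have "b (foot_index k) < b (foot_index k')" using b_foot_index by simp
  then show "foot_index k < foot_index k'" using EB.enum_less_iff by blast
qed

lemma foot_index_surj: "surj foot_index"
  unfolding surj_def
proof
  fix m
  obtain x where x: "M (b m, False) = (x, True)" using vertical_bottom_b by (metis prod.collapse)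
  then have "M (x, True) = (b m, False)" by (rule match_eq_sym)
  then have "vertical_top x" "foot x = b m" unfolding foot_def by simp_all
  then have "m = foot_index (ai x)" unfolding foot_index_def using a_ai EB.index_enum by simp
  then show "\<exists>k. m = foot_index k" ..
qed

lemma foot_index_shift: "foot_index k = k + foot_index 0"
  using strict_mono_surj_int_shift[OF foot_index_strict_mono foot_index_surj] .

lemma same_card_fixpts: "card (fixpts n A) = card (fixpts n B)"
proof -
  define tA where "tA = int (card (fixpts n A))"
  define tB where "tB = int (card (fixpts n B))"
  have "b (foot_index tA) = foot (a 0 + int n)"
    using b_foot_index EA.enum_shift1[of 0] tA_def by simp
  also have "\<dots> = foot (a 0) + int n"
    unfolding foot_def using match_periodic by simp
  also have "\<dots> = b (foot_index 0 + tB)"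
    using b_foot_index EB.enum_shift1 tB_def by simp
  finally have "foot_index tA = foot_index 0 + tB" using EB.enum_inj by blast
  then show ?thesis using foot_index_shift[of tA] tA_def tB_def by simp
qed

lemma admissible: "admissible_pair n A B"
  unfolding admissible_pair_def admissible_pair_axioms_def
  using annular_S1 annular_S2 same_card_fixpts by simp

lemma match_eq_triple_match: "M = triple_match n A B (- foot_index 0)"
proof
  fix p :: node
  obtain x u where p: "p = (x, u)" by (cases p)
  show "M p = triple_match n A B (- foot_index 0) p"
  proof (cases u)
    case True
    show ?thesis
    proof (cases "vertical_top x")
      case vx: True
      have "M (x, True) = (foot x, False)" using vertical_edge_foot[OF vx] match_eq_sym by blast
      moreover have "foot x = b (ai x - (- foot_index 0))"
        using b_foot_index[of "ai x"] foot_index_shift[of "ai x"] a_ai[OF vx] by simp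
      ultimately show ?thesis using p True vx fixed_mod_S1_iff unfolding triple_match_def by simp
    next
      case False
      then show ?thesis
        using p True top_arc_partner[OF False] fixed_mod_S1_iff unfolding triple_match_def by simp
    qed
  next
    case False
    show ?thesis
    proof (cases "snd (M (x, False))")
      case fx: True
      obtain y where y: "M (x, False) = (y, True)" using fx by (metis prod.collapse)
      then have "M (y, True) = (x, False)" by (rule match_eq_sym)
      then have vy: "vertical_top y" and "foot y = x" unfolding foot_def by simp_all
      then have "b (foot_index (ai y)) = x" using b_foot_index a_ai by metis
      then have "foot_index (ai y) = bi x" using EB.index_enum by metis
      then have "ai y = bi x + - foot_index 0" using foot_index_shift[of "ai y"] by simp
      then have "y = a (bi x + - foot_index 0)" using a_ai[OF vy] by metis
      then show ?thesis using p False y fx fixed_mod_S2_iff unfolding triple_match_def by simp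
    next
      case nf: False
      then show ?thesis
        using p False bottom_arc_partner[OF nf] fixed_mod_S2_iff unfolding triple_match_def by simp
    qed
  qed
qed

theorem diagram_eq_triple_diagram: "D = triple_diagram n A B (wind D)"
proof -
  have D: "D = triple_diagram n A B (- foot_index 0)"
    using match_eq_triple_match no_lines unfolding triple_diagram_def match_def nlines_def
    by (metis prod.collapse)
  then have "wind D = - foot_index 0"
    using admissible_pair.wind_diagram[OF admissible] by metis
  then show ?thesis using D by simp
qed

end

section \<open>The classification\<close>

lemma even_card_if_fixpoint_free_involution:
  assumes "finite X" and "\<And>x. x \<in> X \<Longrightarrow> S x \<in> X \<and> S x \<noteq> x \<and> S (S x) = x"
  shows "even (card X)"
  using assms
proof (induction "card X" arbitrary: X rule: less_induct)
  case less
  show ?case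
  proof (cases "X = {}")
    case False
    then obtain x where x: "x \<in> X" by blast
    then have Sx: "S x \<in> X" "S x \<noteq> x" "S (S x) = x" using less.prems by auto
    let ?Y = "X - {x, S x}"
    have card_X: "card X = card ?Y + 2"
      using less.prems(1) x Sx card_Diff_subset[of "{x, S x}" X] card_mono[of X "{x, S x}"] by auto
    have "S y \<in> ?Y \<and> S y \<noteq> y \<and> S (S y) = y" if "y \<in> ?Y" for y
    proof -
      have y: "y \<in> X" "y \<noteq> x" "y \<noteq> S x" using that by auto
      then have "S y \<in> X" "S y \<noteq> y" "S (S y) = y" using less.prems(2) by auto
      moreover have "S y \<noteq> x" "S y \<noteq> S x" using y \<open>S (S y) = y\<close> Sx by metis+
      ultimately show ?thesis by auto
    qed
    then have "even (card ?Y)" using less.hyps[of ?Y] card_X less.prems(1) by simp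
    then show ?thesis using card_X by simp
  qed simp
qed

lemma even_card_fixpts:
  assumes A: "A \<in> invols n" and n: "even n"
  shows "even (card (fixpts n A))"
proof -
  let ?F = "fixpts n A" and ?N = "{1..int n} - fixpts n A"
  have sub: "?F \<subseteq> {1..int n}" unfolding fixpts_def by auto
  then have "card ?N + card ?F = n" using card_Diff_subset[of ?F "{1..int n}"] card_mono[OF _ sub]
    by (simp add: finite_subset)
  moreover have "even (card ?N)"
    by (rule even_card_if_fixpoint_free_involution[where S = A])
      (use A in \<open>auto simp: invols_def fixpts_def\<close>)
  ultimately show ?thesis using n by (metis even_add)
qed

context admissible_pair
begin

lemma bracket_eq: "bracket n A B w = triple_diagram n A B w"
  unfolding bracket_def
proof (rule the_equality)
  show "is_affine_diagram n (triple_diagram n A B w) \<and> has_vertical (triple_diagram n A B w) \<and>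
      S1 n (triple_diagram n A B w) = A \<and> S2 n (triple_diagram n A B w) = B \<and>
      wind (triple_diagram n A B w) = w"
    using diagram_affine diagram_has_vertical S1_diagram S2_diagram wind_diagram by simp
next
  fix D assume D: "is_affine_diagram n D \<and> has_vertical D \<and> S1 n D = A \<and> S2 n D = B \<and> wind D = w"
  then have "vertical_diagram n D" unfolding vertical_diagram_def using n_pos by simp
  then show "D = triple_diagram n A B w"
    using vertical_diagram.diagram_eq_triple_diagram D by metis
qed

lemma bracket_components:
  "S1 n (bracket n A B w) = A \<and> S2 n (bracket n A B w) = B \<and> wind (bracket n A B w) = w"
  unfolding bracket_eq using S1_diagram S2_diagram wind_diagram by simp

lemma in_O_bracket_iff:
  "in_O (bracket n A B w) \<longleftrightarrow> even (int (card (arcs_over_cut n A) + card (arcs_over_cut n B)) + w)"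
  unfolding bracket_eq by (rule in_O_diagram_iff)

lemma even_rmin: "even (int (card (arcs_over_cut n A) + card (arcs_over_cut n B)) + rmin n A B)"
proof -
  let ?c = "card (arcs_over_cut n A) + card (arcs_over_cut n B)"
  have "in_O (bracket n A B (int (if even ?c then 0 else 1)))"
    unfolding in_O_bracket_iff by simp
  then have "in_O (bracket n A B (int (LEAST r. in_O (bracket n A B (int r)))))"
    by (rule LeastI)
  then show ?thesis unfolding rmin_def in_O_bracket_iff .
qed

lemma in_O_bracket_rmin_iff: "in_O (bracket n A B (rmin n A B + w)) \<longleftrightarrow> even w"
  using even_rmin unfolding in_O_bracket_iff by presburger

end

lemma admissible_pair_if_Inv:
  assumes "t \<in> {2..n}" "A \<in> Ann n \<inter> Inv n t" "B \<in> Ann n \<inter> Inv n t"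
  shows "admissible_pair n A B"
  using assms unfolding admissible_pair_def admissible_pair_axioms_def annular_inv_def Inv_def
  by auto

lemma Inv_if_admissible_pair:
  assumes "admissible_pair n A B" and "even n"
  shows "\<exists>t. t \<in> {2..n} \<and> even t \<and> A \<in> Ann n \<inter> Inv n t \<and> B \<in> Ann n \<inter> Inv n t"
proof -
  interpret admissible_pair n A B by (rule assms(1))
  let ?t = "card (fixpts n A)"
  have invols: "A \<in> invols n" "B \<in> invols n"
    using A.annular_inv B.annular_inv unfolding Ann_def by auto
  have "even ?t" using even_card_fixpts[OF invols(1) assms(2)] .
  moreover have "?t \<le> n" using card_mono[OF _ EA.subset_window] by simp
  moreover have "?t \<noteq> 0" using EA.card_pos by simp
  ultimately show ?thesis using invols same_card A.annular_inv B.annular_inv unfolding Inv_def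
    by (intro exI[of _ ?t]) auto
qed

lemma affine_vertical_in_O_is_bracket:
  assumes D: "is_affine_diagram n D" "has_vertical D" "in_O D" and n: "n > 0" "even n"
  shows "\<exists>A B w t. D = bracket n A B (rmin n A B + w) \<and>
    t \<in> {2..n} \<and> even t \<and> A \<in> Ann n \<inter> Inv n t \<and> B \<in> Ann n \<inter> Inv n t \<and> even w"
proof -
  interpret vertical_diagram n D using D n by unfold_locales
  let ?w = "wind D - rmin n A B"
  have "D = bracket n A B (rmin n A B + ?w)"
    using diagram_eq_triple_diagram admissible_pair.bracket_eq[OF admissible] by simp
  moreover have "even ?w"
    using D(3) calculation admissible_pair.in_O_bracket_rmin_iff[OF admissible] by metis
  ultimately show ?thesis using Inv_if_admissible_pair[OF admissible n(2)] by blast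
qed

lemma bracket_rmin_affine_vertical_in_O:
  assumes "t \<in> {2..n}" "A \<in> Ann n \<inter> Inv n t" "B \<in> Ann n \<inter> Inv n t" and "even w"
  shows "is_affine_diagram n (bracket n A B (rmin n A B + w)) \<and>
    has_vertical (bracket n A B (rmin n A B + w)) \<and> in_O (bracket n A B (rmin n A B + w))"
proof -
  interpret admissible_pair n A B using admissible_pair_if_Inv[OF assms(1-3)] .
  show ?thesis using bracket_eq diagram_affine diagram_has_vertical in_O_bracket_rmin_iff assms(4)
    by simp
qed

lemma bracket_rmin_inj:
  assumes "t \<in> {2..n}" "A \<in> Ann n \<inter> Inv n t" "B \<in> Ann n \<inter> Inv n t"
    and "t' \<in> {2..n}" "A' \<in> Ann n \<inter> Inv n t'" "B' \<in> Ann n \<inter> Inv n t'"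
    and same: "bracket n A B (rmin n A B + w) = bracket n A' B' (rmin n A' B' + w')"
  shows "A = A' \<and> B = B' \<and> w = w'"
proof -
  let ?D = "bracket n A' B' (rmin n A' B' + w')"
  have "S1 n ?D = A" "S2 n ?D = B" "wind ?D = rmin n A B + w"
    using admissible_pair.bracket_components[OF admissible_pair_if_Inv[OF assms(1-3)],
        of "rmin n A B + w"]
    unfolding same by auto
  moreover have "S1 n ?D = A'" "S2 n ?D = B'" "wind ?D = rmin n A' B' + w'"
    using admissible_pair.bracket_components[OF admissible_pair_if_Inv[OF assms(4-6)]] by auto
  ultimately show ?thesis by simp
qed

theorem lemma3p5p1:
  fixes n :: nat
  assumes "n \<ge> 4" and "even n"
  shows "{D. is_affine_diagram n D \<and> has_vertical D \<and> in_O D} =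
           {bracket n A B (rmin n A B + w) | A B w t.
              t \<in> {2..n} \<and> even t \<and> A \<in> Ann n \<inter> Inv n t \<and> B \<in> Ann n \<inter> Inv n t \<and> even w} \<and>
         inj_on (\<lambda>(A, B, w). bracket n A B (rmin n A B + w))
           {(A, B, w). \<exists>t. t \<in> {2..n} \<and> even t \<and> A \<in> Ann n \<inter> Inv n t \<and>
                           B \<in> Ann n \<inter> Inv n t \<and> even w}"
proof -
  have "n > 0" using assms(1) by simp
  note diagrams = affine_vertical_in_O_is_bracket[OF _ _ _ this assms(2)]
    bracket_rmin_affine_vertical_in_O
  show ?thesis
    by (intro conjI set_eqI iffI inj_onI) (use diagrams bracket_rmin_inj in \<open>auto; blast\<close>)+
qed

end
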